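(* Let $\mathcal{R}$ be a commutative ring, $S'\le S$ finite $p$-groups, $\mathcal{F}_1$ a fusion system over $S$, $\mathcal{F}_2,\mathcal{F}_e$ fusion systems over $S'$ with $\mathcal{F}_e\subseteq\mathcal{F}_1\cap\mathcal{F}_2$, $\mathcal{F}=\langle\mathcal{F}_1,\mathcal{F}_2\rangle_S$, $\mathcal{C}$ a family of subgroups of $S$ containing $S'$ and closed under $\mathcal{F}$-conjugation and overgroups, and $M:\mathcal{O}_{\mathcal{C}}(\mathcal{F})^{op}\to\mathcal{R}$-mod a functor. Let $f^*:\operatorname{Nat}_{\mathcal{O}_{\mathcal{C}}(\mathcal{F})}(CX_0,M)\to\operatorname{Nat}_{\mathcal{O}_{\mathcal{C}}(\mathcal{F})}(CX_1,M)$ be precomposition with $f$. Then $\ker(f^* )\cong M^{\mathcal{F}}$ and $\operatorname{coker}(f^* )\cong M^{\mathcal{F}_e}/\big(M^{\mathcal{F}_1}\overline{\iota_{S'}^S}+M^{\mathcal{F}_2}\big)$.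
   Context: For $\mathcal{E}\in\{\mathcal{F}_1,\mathcal{F}_2,\mathcal{F}_e,\mathcal{F}\}$, $M^{\mathcal{E}}:=\varprojlim_{\mathcal{O}_{\mathcal{C}}(\mathcal{E})}(M\downarrow_{\mathcal{O}_{\mathcal{C}}(\mathcal{E})})$, where $\mathcal{O}_{\mathcal{C}}(\mathcal{E})$ is the full subcategory on subgroups in $\mathcal{C}$ of the orbit category of $\mathcal{E}$ (morphisms $\operatorname{Aut}_Q(Q)\backslash\operatorname{Hom}_{\mathcal{E}}(P,Q)$). $M^{\mathcal{F}_e},M^{\mathcal{F}_2}$ are identified with their (injective) projections to $M(S')$, and $M^{\mathcal{F}_1},M^{\mathcal{F}}$ with their projections to $M(S)$; $M^{\mathcal{F}_1}\overline{\iota_{S'}^S}$ denotes the image of $M^{\mathcal{F}_1}$ under $M(\overline{\iota_{S'}^S}):M(S)\to M(S')$, $\overline{\iota_{S'}^S}$ the class of the inclusion. $\operatorname{Rep}_{\mathcal{F}}(P,\mathcal{H})=\operatorname{Hom}_{\mathcal{F}}(P,S_{\mathcal{H}})/\sim$ ($\varphi\sim\psi$ iff $\theta\varphi=\psi$ for an $\mathcal{H}$-isomorphism $\theta$), $CX_0(P)=\mathcal{R}\operatorname{Rep}_{\mathcal{F}}(P,\mathcal{F}_1)\oplus\mathcal{R}\operatorname{Rep}_{\mathcal{F}}(P,\mathcal{F}_2)$, $CX_1(P)=\mathcal{R}\operatorname{Rep}_{\mathcal{F}}(P,\mathcal{F}_e)$ (functorial by precomposition), $f(\lambda[\varphi]_{\mathcal{F}_e})=(-\lambda[\iota_{S'}^S\varphi]_{\mathcal{F}_1},\lambda[\varphi]_{\mathcal{F}_2})$.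 *)

theory Defs
  imports "HOL-Algebra.Algebra"
begin

(* subgroups of G (G plays the role of the ambient group S) are sets of elements;
   morphisms between subgroups are functions extensional on their domain *)

definition conjg :: "('a, 'b) monoid_scheme \<Rightarrow> 'a \<Rightarrow> 'a set \<Rightarrow> 'a \<Rightarrow> 'a" where
  "conjg G g P = restrict (\<lambda>x. g \<otimes>\<^bsub>G\<^esub> x \<otimes>\<^bsub>G\<^esub> inv\<^bsub>G\<^esub> g) P"

definition HomT :: "('a, 'b) monoid_scheme \<Rightarrow> 'a set \<Rightarrow> 'a set \<Rightarrow> 'a set \<Rightarrow> ('a \<Rightarrow> 'a) set" where
  "HomT G T P Q = {conjg G g P | g. g \<in> T \<and> conjg G g P ` P \<subseteq> Q}"

definition InjHom :: "('a, 'b) monoid_scheme \<Rightarrow> 'a set \<Rightarrow> 'a set \<Rightarrow> ('a \<Rightarrow> 'a) set" where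
  "InjHom G P Q = {\<phi> \<in> extensional P. \<phi> \<in> hom (G\<lparr>carrier := P\<rparr>) (G\<lparr>carrier := Q\<rparr>) \<and> inj_on \<phi> P}"

definition subgrps :: "('a, 'b) monoid_scheme \<Rightarrow> 'a set \<Rightarrow> 'a set set" where
  "subgrps G T = {P. subgroup P G \<and> P \<subseteq> T}"

definition comp_on :: "'a set \<Rightarrow> ('a \<Rightarrow> 'a) \<Rightarrow> ('a \<Rightarrow> 'a) \<Rightarrow> ('a \<Rightarrow> 'a)" where
  "comp_on P \<psi> \<phi> = restrict (\<psi> \<circ> \<phi>) P"

definition fusion_system ::
  "('a, 'b) monoid_scheme \<Rightarrow> 'a set \<Rightarrow> ('a set \<Rightarrow> 'a set \<Rightarrow> ('a \<Rightarrow> 'a) set) \<Rightarrow> bool" where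
  "fusion_system G T F \<longleftrightarrow>
     subgroup T G \<and>
     (\<forall>P Q. (P \<in> subgrps G T \<and> Q \<in> subgrps G T \<longrightarrow> HomT G T P Q \<subseteq> F P Q \<and> F P Q \<subseteq> InjHom G P Q) \<and>
            (\<not> (P \<in> subgrps G T \<and> Q \<in> subgrps G T) \<longrightarrow> F P Q = {})) \<and>
     (\<forall>P Q R \<phi> \<psi>. \<phi> \<in> F P Q \<longrightarrow> \<psi> \<in> F Q R \<longrightarrow> comp_on P \<psi> \<phi> \<in> F P R) \<and>
     (\<forall>P Q \<phi>. \<phi> \<in> F P Q \<longrightarrow> \<phi> \<in> F P (\<phi> ` P) \<and> restrict (inv_into P \<phi>) (\<phi> ` P) \<in> F (\<phi> ` P) P)"

definition subsystem :: "('a set \<Rightarrow> 'a set \<Rightarrow> ('a \<Rightarrow> 'a) set) \<Rightarrow> ('a set \<Rightarrow> 'a set \<Rightarrow> ('a \<Rightarrow> 'a) set) \<Rightarrow> bool" where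
  "subsystem E F \<longleftrightarrow> (\<forall>P Q. E P Q \<subseteq> F P Q)"

definition generated_fs ::
  "('a, 'b) monoid_scheme \<Rightarrow> ('a set \<Rightarrow> 'a set \<Rightarrow> ('a \<Rightarrow> 'a) set) \<Rightarrow> ('a set \<Rightarrow> 'a set \<Rightarrow> ('a \<Rightarrow> 'a) set)
    \<Rightarrow> ('a set \<Rightarrow> 'a set \<Rightarrow> ('a \<Rightarrow> 'a) set)" where
  "generated_fs G F1 F2 = (\<lambda>P Q. \<Inter>{H P Q | H. fusion_system G (carrier G) H \<and> subsystem F1 H \<and> subsystem F2 H})"

definition p_group :: "('a, 'b) monoid_scheme \<Rightarrow> nat \<Rightarrow> 'a set \<Rightarrow> bool" where
  "p_group G p P \<longleftrightarrow> finite P \<and> (\<exists>n. card P = p ^ n)"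

(* The morphism of O(F) represented by \<phi> : P \<rightarrow> Q, i.e. its class in Aut_Q(Q)\Hom_F(P,Q) *)
definition orb_cls :: "('a, 'b) monoid_scheme \<Rightarrow> 'a set \<Rightarrow> 'a set \<Rightarrow> ('a \<Rightarrow> 'a) \<Rightarrow> ('a \<Rightarrow> 'a) set" where
  "orb_cls G P Q \<phi> = (\<lambda>q. comp_on P (conjg G q Q) \<phi>) ` Q"

definition orb_hom :: "('a, 'b) monoid_scheme \<Rightarrow> ('a set \<Rightarrow> 'a set \<Rightarrow> ('a \<Rightarrow> 'a) set) \<Rightarrow> 'a set \<Rightarrow> 'a set
    \<Rightarrow> ('a \<Rightarrow> 'a) set set" where
  "orb_hom G F P Q = orb_cls G P Q ` F P Q"

definition linear_map :: "('r, 'c) ring_scheme \<Rightarrow> ('r, 'm) module \<Rightarrow> ('r, 'n) module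
    \<Rightarrow> ('m \<Rightarrow> 'n) \<Rightarrow> bool" where
  "linear_map R A B h \<longleftrightarrow> h \<in> carrier A \<rightarrow> carrier B \<and>
     (\<forall>x\<in>carrier A. \<forall>y\<in>carrier A. h (x \<oplus>\<^bsub>A\<^esub> y) = h x \<oplus>\<^bsub>B\<^esub> h y) \<and>
     (\<forall>r\<in>carrier R. \<forall>x\<in>carrier A. h (r \<odot>\<^bsub>A\<^esub> x) = r \<odot>\<^bsub>B\<^esub> h x)"

definition mod_iso :: "('r, 'c) ring_scheme \<Rightarrow> ('r, 'm) module \<Rightarrow> ('r, 'n) module \<Rightarrow> bool" where
  "mod_iso R A B \<longleftrightarrow> (\<exists>h. linear_map R A B h \<and> bij_betw h (carrier A) (carrier B))"

definition quot_mod :: "('r, 'm) module \<Rightarrow> 'm set \<Rightarrow> ('r, 'm set) module" where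
  "quot_mod A N = (undefined::(_, _) module)\<lparr>carrier := a_rcosets\<^bsub>A\<^esub> N,
      zero := N, add := set_add A,
      smult := (\<lambda>c Y. \<Union>((\<lambda>x. a_r_coset A N (c \<odot>\<^bsub>A\<^esub> x)) ` Y)) \<rparr>"

definition submod :: "('r, 'm) module \<Rightarrow> 'm set \<Rightarrow> ('r, 'm) module" where
  "submod A0 Y = A0\<lparr>carrier := Y\<rparr>"

definition free_mod :: "('r, 'c) ring_scheme \<Rightarrow> 'x set \<Rightarrow> ('r, 'x \<Rightarrow> 'r) module" where
  "free_mod R Bs = (undefined::(_, _) module)\<lparr>carrier := {a. (\<forall>x\<in>Bs. a x \<in> carrier R) \<and> (\<forall>x. x \<notin> Bs \<longrightarrow> a x = \<zero>\<^bsub>R\<^esub>)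
                                   \<and> finite {x. a x \<noteq> \<zero>\<^bsub>R\<^esub>}},
      zero := (\<lambda>x. \<zero>\<^bsub>R\<^esub>), add := (\<lambda>a b x. a x \<oplus>\<^bsub>R\<^esub> b x),
      smult := (\<lambda>r a x. if x \<in> Bs then r \<otimes>\<^bsub>R\<^esub> a x else \<zero>\<^bsub>R\<^esub>) \<rparr>"

definition basis_vec :: "('r, 'c) ring_scheme \<Rightarrow> 'x \<Rightarrow> 'x \<Rightarrow> 'r" where
  "basis_vec R x = (\<lambda>y. if y = x then \<one>\<^bsub>R\<^esub> else \<zero>\<^bsub>R\<^esub>)"

definition free_map :: "('r, 'c) ring_scheme \<Rightarrow> 'x set \<Rightarrow> ('x \<Rightarrow> 'y) \<Rightarrow> ('x \<Rightarrow> 'r) \<Rightarrow> ('y \<Rightarrow> 'r)" where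
  "free_map R Bs g a = (\<lambda>y. finsum R a {x \<in> Bs. a x \<noteq> \<zero>\<^bsub>R\<^esub> \<and> g x = y})"

(* M : objects P \<mapsto> module M P; Mmap P Q \<rho> : M Q \<rightarrow> M P for a morphism \<rho> : P \<rightarrow> Q of O_C(F) *)
definition orbit_functor ::
  "('a, 'b) monoid_scheme \<Rightarrow> ('a set \<Rightarrow> 'a set \<Rightarrow> ('a \<Rightarrow> 'a) set) \<Rightarrow> 'a set set \<Rightarrow> ('r, 'c) ring_scheme
   \<Rightarrow> ('a set \<Rightarrow> ('r, 'm) module) \<Rightarrow> ('a set \<Rightarrow> 'a set \<Rightarrow> ('a \<Rightarrow> 'a) set \<Rightarrow> 'm \<Rightarrow> 'm) \<Rightarrow> bool" where
  "orbit_functor G F C R M Mmap \<longleftrightarrow>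
     (\<forall>P\<in>C. module R (M P)) \<and>
     (\<forall>P\<in>C. \<forall>Q\<in>C. \<forall>\<rho>\<in>orb_hom G F P Q. linear_map R (M Q) (M P) (Mmap P Q \<rho>)) \<and>
     (\<forall>P\<in>C. \<forall>x\<in>carrier (M P). Mmap P P (orb_cls G P P (restrict id P)) x = x) \<and>
     (\<forall>P\<in>C. \<forall>Q\<in>C. \<forall>R'\<in>C. \<forall>\<phi>\<in>F P Q. \<forall>\<psi>\<in>F Q R'. \<forall>x\<in>carrier (M R').
        Mmap P R' (orb_cls G P R' (comp_on P \<psi> \<phi>)) x
          = Mmap P Q (orb_cls G P Q \<phi>) (Mmap Q R' (orb_cls G Q R' \<psi>) x))"

(* M^E (E a fusion system over T, T \<in> C): inverse limit of M restricted to O_C(E),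
   i.e. compatible families (x_P)_{P \<in> C, P \<le> T}, identified with its projection to M(T) *)
definition fixed_pts ::
  "('a, 'b) monoid_scheme \<Rightarrow> 'a set set \<Rightarrow> ('a set \<Rightarrow> ('r, 'm) module)
   \<Rightarrow> ('a set \<Rightarrow> 'a set \<Rightarrow> ('a \<Rightarrow> 'a) set \<Rightarrow> 'm \<Rightarrow> 'm)
   \<Rightarrow> ('a set \<Rightarrow> 'a set \<Rightarrow> ('a \<Rightarrow> 'a) set) \<Rightarrow> 'a set \<Rightarrow> 'm set" where
  "fixed_pts G C M Mmap E T = {y T | y.
      (\<forall>P\<in>C. P \<subseteq> T \<longrightarrow> y P \<in> carrier (M P)) \<and>
      (\<forall>P\<in>C. \<forall>Q\<in>C. P \<subseteq> T \<longrightarrow> Q \<subseteq> T \<longrightarrow> (\<forall>\<rho>\<in>orb_hom G E P Q. Mmap P Q \<rho> (y Q) = y P))}"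

(* Rep_F(P,H) for H a fusion system over T_H: Hom_F(P,T_H) modulo post-composition with H-isomorphisms *)
definition rep_cls :: "('a set \<Rightarrow> 'a set \<Rightarrow> ('a \<Rightarrow> 'a) set) \<Rightarrow> ('a set \<Rightarrow> 'a set \<Rightarrow> ('a \<Rightarrow> 'a) set) \<Rightarrow> 'a set
    \<Rightarrow> 'a set \<Rightarrow> ('a \<Rightarrow> 'a) \<Rightarrow> ('a \<Rightarrow> 'a) set" where
  "rep_cls F H TH P \<phi> = {\<psi> \<in> F P TH. \<exists>\<theta> \<in> H (\<phi> ` P) (\<psi> ` P).
       bij_betw \<theta> (\<phi> ` P) (\<psi> ` P) \<and> \<psi> = comp_on P \<theta> \<phi>}"

definition Rep :: "('a set \<Rightarrow> 'a set \<Rightarrow> ('a \<Rightarrow> 'a) set) \<Rightarrow> ('a set \<Rightarrow> 'a set \<Rightarrow> ('a \<Rightarrow> 'a) set) \<Rightarrow> 'a set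
    \<Rightarrow> 'a set \<Rightarrow> ('a \<Rightarrow> 'a) set set" where
  "Rep F H TH P = rep_cls F H TH P ` F P TH"

(* CX_1(P) = R Rep_F(P, Fe) *)
definition CX1_basis where
  "CX1_basis F Fe S' P = Rep F Fe S' P"

(* CX_0(P) = R Rep_F(P,F1) \<oplus> R Rep_F(P,F2), as the free module on the disjoint union *)
definition CX0_basis where
  "CX0_basis F F1 F2 S S' P = Rep F F1 S P <+> Rep F F2 S' P"

definition rep_pre :: "('a set \<Rightarrow> 'a set \<Rightarrow> ('a \<Rightarrow> 'a) set) \<Rightarrow> ('a set \<Rightarrow> 'a set \<Rightarrow> ('a \<Rightarrow> 'a) set) \<Rightarrow> 'a set
    \<Rightarrow> 'a set \<Rightarrow> ('a \<Rightarrow> 'a) \<Rightarrow> ('a \<Rightarrow> 'a) set \<Rightarrow> ('a \<Rightarrow> 'a) set" where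
  "rep_pre F H TH P \<rho> c = rep_cls F H TH P (comp_on P (SOME \<phi>. \<phi> \<in> c) \<rho>)"

definition CX1_map where
  "CX1_map R F Fe S' P Q \<rho> = free_map R (CX1_basis F Fe S' Q) (rep_pre F Fe S' P \<rho>)"

definition CX0_map where
  "CX0_map R F F1 F2 S S' P Q \<rho> = free_map R (CX0_basis F F1 F2 S S' Q)
      (map_sum (rep_pre F F1 S P \<rho>) (rep_pre F F2 S' P \<rho>))"

definition nat_trans ::
  "('a, 'b) monoid_scheme \<Rightarrow> ('a set \<Rightarrow> 'a set \<Rightarrow> ('a \<Rightarrow> 'a) set) \<Rightarrow> 'a set set \<Rightarrow> ('r, 'c) ring_scheme
   \<Rightarrow> ('a set \<Rightarrow> 'x set) \<Rightarrow> ('a set \<Rightarrow> 'a set \<Rightarrow> ('a \<Rightarrow> 'a) \<Rightarrow> ('x \<Rightarrow> 'r) \<Rightarrow> ('x \<Rightarrow> 'r))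
   \<Rightarrow> ('a set \<Rightarrow> ('r, 'm) module) \<Rightarrow> ('a set \<Rightarrow> 'a set \<Rightarrow> ('a \<Rightarrow> 'a) set \<Rightarrow> 'm \<Rightarrow> 'm)
   \<Rightarrow> ('a set \<Rightarrow> ('x \<Rightarrow> 'r) \<Rightarrow> 'm) set" where
  "nat_trans G F C R B Bmap M Mmap = {\<eta>.
     \<eta> \<in> extensional C \<and>
     (\<forall>P\<in>C. \<eta> P \<in> extensional (carrier (free_mod R (B P))) \<and>
             linear_map R (free_mod R (B P)) (M P) (\<eta> P)) \<and>
     (\<forall>P\<in>C. \<forall>Q\<in>C. \<forall>\<rho>\<in>F P Q. \<forall>a\<in>carrier (free_mod R (B Q)).
        \<eta> P (Bmap P Q \<rho> a) = Mmap P Q (orb_cls G P Q \<rho>) (\<eta> Q a))}"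

definition nat_mod ::
  "('a, 'b) monoid_scheme \<Rightarrow> ('a set \<Rightarrow> 'a set \<Rightarrow> ('a \<Rightarrow> 'a) set) \<Rightarrow> 'a set set \<Rightarrow> ('r, 'c) ring_scheme
   \<Rightarrow> ('a set \<Rightarrow> 'x set) \<Rightarrow> ('a set \<Rightarrow> 'a set \<Rightarrow> ('a \<Rightarrow> 'a) \<Rightarrow> ('x \<Rightarrow> 'r) \<Rightarrow> ('x \<Rightarrow> 'r))
   \<Rightarrow> ('a set \<Rightarrow> ('r, 'm) module) \<Rightarrow> ('a set \<Rightarrow> 'a set \<Rightarrow> ('a \<Rightarrow> 'a) set \<Rightarrow> 'm \<Rightarrow> 'm)
   \<Rightarrow> ('r, 'a set \<Rightarrow> ('x \<Rightarrow> 'r) \<Rightarrow> 'm) module" where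
  "nat_mod G F C R B Bmap M Mmap = (undefined::(_, _) module)\<lparr>carrier := nat_trans G F C R B Bmap M Mmap,
     zero := (\<lambda>P\<in>C. \<lambda>a\<in>carrier (free_mod R (B P)). \<zero>\<^bsub>M P\<^esub>),
     add := (\<lambda>\<eta> \<mu>. \<lambda>P\<in>C. \<lambda>a\<in>carrier (free_mod R (B P)). \<eta> P a \<oplus>\<^bsub>M P\<^esub> \<mu> P a),
     smult := (\<lambda>r \<eta>. \<lambda>P\<in>C. \<lambda>a\<in>carrier (free_mod R (B P)). r \<odot>\<^bsub>M P\<^esub> \<eta> P a) \<rparr>"

(* f_P : CX_1(P) \<rightarrow> CX_0(P),  \<lambda>[\<phi>]_{Fe} \<mapsto> (-\<lambda>[\<iota> \<phi>]_{F1}, \<lambda>[\<phi>]_{F2}), extended linearly *)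
definition f_map where
  "f_map R F F1 F2 Fe S S' P a = (\<lambda>z. case z of
       Inl c \<Rightarrow> \<ominus>\<^bsub>R\<^esub> finsum R a {d \<in> CX1_basis F Fe S' P. a d \<noteq> \<zero>\<^bsub>R\<^esub> \<and> rep_cls F F1 S P (SOME \<phi>. \<phi> \<in> d) = c}
     | Inr c \<Rightarrow> finsum R a {d \<in> CX1_basis F Fe S' P. a d \<noteq> \<zero>\<^bsub>R\<^esub> \<and> rep_cls F F2 S' P (SOME \<phi>. \<phi> \<in> d) = c})"

definition fstar where
  "fstar R F F1 F2 Fe S S' C \<eta> = (\<lambda>P\<in>C. \<lambda>a\<in>carrier (free_mod R (CX1_basis F Fe S' P)).
       \<eta> P (f_map R F F1 F2 Fe S S' P a))"

end

theory Submission
  imports Defs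
begin

(* A Yoneda argument identifies natural transformations R Rep_F(-,H) -> M, for a fusion
   system H over T <= S contained in F, with M^H: such a transformation is determined by its
   value at the class of the inclusion of T, and the values that occur are exactly the compatible
   families for H.  Hence Nat(CX_1, M) = M^Fe and Nat(CX_0, M) = M^F1 x M^F2, and f^* becomes
   (x_1, x_2) |-> -(x_1 restricted to S') + x_2, which gives the cokernel.  For the kernel, the
   condition x_1|S' = x_2 makes the family of restrictions of x_1 compatible with the morphisms
   of both F1 and F2.  The morphisms compatible with a fixed family form a fusion system over S,
   so they include all of F = <F1, F2>, and the kernel is M^F. *)

section \<open>Linear maps between free modules\<close>

lemma linear_mapD:
  assumes "linear_map R A B h"
  shows "\<And>x. x \<in> carrier A \<Longrightarrow> h x \<in> carrier B"
    and "\<And>x y. x \<in> carrier A \<Longrightarrow> y \<in> carrier A \<Longrightarrow> h (x \<oplus>\<^bsub>A\<^esub> y) = h x \<oplus>\<^bsub>B\<^esub> h y"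
    and "\<And>r x. r \<in> carrier R \<Longrightarrow> x \<in> carrier A \<Longrightarrow> h (r \<odot>\<^bsub>A\<^esub> x) = r \<odot>\<^bsub>B\<^esub> h x"
  using assms unfolding linear_map_def by auto

lemma linear_map_comp:
  assumes "linear_map R A B h" "linear_map R B D k"
  shows "linear_map R A D (\<lambda>x. k (h x))"
  using assms unfolding linear_map_def by (auto simp: Pi_def)

lemma linear_map_zero_fun:
  assumes "module R N"
  shows "linear_map R A N (\<lambda>a. \<zero>\<^bsub>N\<^esub>)"
proof -
  interpret module R N by fact
  show ?thesis unfolding linear_map_def by simp
qed

lemma linear_map_minus:
  assumes "module R A" "module R B" "linear_map R A B h" "x \<in> carrier A"
  shows "h (\<ominus>\<^bsub>A\<^esub> x) = \<ominus>\<^bsub>B\<^esub> h x"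
proof -
  interpret A: module R A by fact
  interpret B: module R B by fact
  have "h (\<ominus>\<^bsub>A\<^esub> x) = h ((\<ominus>\<^bsub>R\<^esub> \<one>\<^bsub>R\<^esub>) \<odot>\<^bsub>A\<^esub> x)"
    using A.smult_l_minus[of "\<one>\<^bsub>R\<^esub>" x] assms(4) by simp
  also have "\<dots> = (\<ominus>\<^bsub>R\<^esub> \<one>\<^bsub>R\<^esub>) \<odot>\<^bsub>B\<^esub> h x"
    using linear_mapD(3)[OF assms(3)] assms(4) by simp
  also have "\<dots> = \<ominus>\<^bsub>B\<^esub> h x"
    using B.smult_l_minus[of "\<one>\<^bsub>R\<^esub>" "h x"] linear_mapD(1)[OF assms(3) assms(4)] by simp
  finally show ?thesis .
qed

lemma free_mod_carrier:
  "a \<in> carrier (free_mod R B) \<longleftrightarrow> (\<forall>x\<in>B. a x \<in> carrier R) \<and> (\<forall>x. x \<notin> B \<longrightarrow> a x = \<zero>\<^bsub>R\<^esub>)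
      \<and> finite {x. a x \<noteq> \<zero>\<^bsub>R\<^esub>}"
  by (simp add: free_mod_def)

lemma free_mod_add: "a \<oplus>\<^bsub>free_mod R B\<^esub> b = (\<lambda>x. a x \<oplus>\<^bsub>R\<^esub> b x)"
  by (simp add: free_mod_def)

lemma free_mod_smult: "r \<odot>\<^bsub>free_mod R B\<^esub> a = (\<lambda>x. if x \<in> B then r \<otimes>\<^bsub>R\<^esub> a x else \<zero>\<^bsub>R\<^esub>)"
  by (simp add: free_mod_def)

lemma basis_vec_in_free_mod:
  assumes "ring R" "c \<in> B"
  shows "basis_vec R c \<in> carrier (free_mod R B)"
proof -
  interpret ring R by fact
  have "{x. basis_vec R c x \<noteq> \<zero>\<^bsub>R\<^esub>} \<subseteq> {c}" by (auto simp: basis_vec_def)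
  then have "finite {x. basis_vec R c x \<noteq> \<zero>\<^bsub>R\<^esub>}" by (rule finite_subset) simp
  then show ?thesis using assms(2) unfolding free_mod_carrier by (auto simp: basis_vec_def)
qed

lemma free_mod_add_closed:
  assumes "ring R" "a \<in> carrier (free_mod R B)" "b \<in> carrier (free_mod R B)"
  shows "a \<oplus>\<^bsub>free_mod R B\<^esub> b \<in> carrier (free_mod R B)"
proof -
  interpret ring R by fact
  have "{x. a x \<oplus>\<^bsub>R\<^esub> b x \<noteq> \<zero>\<^bsub>R\<^esub>} \<subseteq> {x. a x \<noteq> \<zero>\<^bsub>R\<^esub>} \<union> {x. b x \<noteq> \<zero>\<^bsub>R\<^esub>}" by auto
  then have "finite {x. a x \<oplus>\<^bsub>R\<^esub> b x \<noteq> \<zero>\<^bsub>R\<^esub>}"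
    by (rule finite_subset) (use assms(2,3) in \<open>simp add: free_mod_carrier\<close>)
  then show ?thesis using assms(2,3) unfolding free_mod_carrier free_mod_add by auto
qed

lemma free_mod_smult_closed:
  assumes "ring R" "r \<in> carrier R" "a \<in> carrier (free_mod R B)"
  shows "r \<odot>\<^bsub>free_mod R B\<^esub> a \<in> carrier (free_mod R B)"
proof -
  interpret ring R by fact
  have "{x. (if x \<in> B then r \<otimes>\<^bsub>R\<^esub> a x else \<zero>\<^bsub>R\<^esub>) \<noteq> \<zero>\<^bsub>R\<^esub>} \<subseteq> {x. a x \<noteq> \<zero>\<^bsub>R\<^esub>}"
    using assms(2,3) by (auto simp: free_mod_carrier)
  then have "finite {x. (if x \<in> B then r \<otimes>\<^bsub>R\<^esub> a x else \<zero>\<^bsub>R\<^esub>) \<noteq> \<zero>\<^bsub>R\<^esub>}"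
    by (rule finite_subset) (use assms(3) in \<open>simp add: free_mod_carrier\<close>)
  then show ?thesis using assms(2,3) unfolding free_mod_carrier free_mod_smult by auto
qed

lemma linear_map_free_mod_cong:
  assumes R: "ring R" and h: "linear_map R (free_mod R B) N h"
    and eq: "\<And>a. a \<in> carrier (free_mod R B) \<Longrightarrow> h a = k a"
  shows "linear_map R (free_mod R B) N k"
  unfolding linear_map_def
proof (intro conjI ballI)
  show "k \<in> carrier (free_mod R B) \<rightarrow> carrier N" using linear_mapD(1)[OF h] eq by auto
next
  fix x y assume x: "x \<in> carrier (free_mod R B)" and y: "y \<in> carrier (free_mod R B)"
  show "k (x \<oplus>\<^bsub>free_mod R B\<^esub> y) = k x \<oplus>\<^bsub>N\<^esub> k y"
    using eq[OF free_mod_add_closed[OF R x y]] linear_mapD(2)[OF h x y] eq[OF x] eq[OF y] by simp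
next
  fix r x assume r: "r \<in> carrier R" and x: "x \<in> carrier (free_mod R B)"
  show "k (r \<odot>\<^bsub>free_mod R B\<^esub> x) = r \<odot>\<^bsub>N\<^esub> k x"
    using eq[OF free_mod_smult_closed[OF R r x]] linear_mapD(3)[OF h r x] eq[OF x] by simp
qed

lemma linear_map_free_mod_expansion:
  assumes R: "cring R" and N: "module R N" and h: "linear_map R (free_mod R B) N h"
    and fin: "finite B" and a: "a \<in> carrier (free_mod R B)"
  shows "h a = (\<Oplus>\<^bsub>N\<^esub>c\<in>B. a c \<odot>\<^bsub>N\<^esub> h (basis_vec R c))"
proof -
  interpret R: cring R by fact
  interpret N: module R N by fact
  have aR: "\<And>x. x \<in> B \<Longrightarrow> a x \<in> carrier R" and a0: "\<And>x. x \<notin> B \<Longrightarrow> a x = \<zero>\<^bsub>R\<^esub>"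
    using a by (auto simp: free_mod_carrier)
  have hC: "\<And>c. c \<in> B \<Longrightarrow> h (basis_vec R c) \<in> carrier N"
    by (intro linear_mapD(1)[OF h] basis_vec_in_free_mod[OF R.ring_axioms])
  define restr where "restr D = (\<lambda>x. if x \<in> D then a x else \<zero>\<^bsub>R\<^esub>)" for D
  have restr_carrier: "restr D \<in> carrier (free_mod R B)" if "D \<subseteq> B" for D
  proof -
    have "{x. restr D x \<noteq> \<zero>\<^bsub>R\<^esub>} \<subseteq> {x. a x \<noteq> \<zero>\<^bsub>R\<^esub>}" by (auto simp: restr_def)
    then have "finite {x. restr D x \<noteq> \<zero>\<^bsub>R\<^esub>}"
      by (rule finite_subset) (use a in \<open>simp add: free_mod_carrier\<close>)
    then show ?thesis unfolding free_mod_carrier using aR that by (auto simp: restr_def)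
  qed
  have "h (restr D) = (\<Oplus>\<^bsub>N\<^esub>c\<in>D. a c \<odot>\<^bsub>N\<^esub> h (basis_vec R c))" if "finite D" "D \<subseteq> B" for D
    using that
  proof (induct D rule: finite_induct)
    case empty
    have "restr {} = \<zero>\<^bsub>R\<^esub> \<odot>\<^bsub>free_mod R B\<^esub> a"
      using aR by (auto simp: restr_def free_mod_smult)
    then show ?case
      using linear_mapD(3)[OF h R.zero_closed a] linear_mapD(1)[OF h a] by simp
  next
    case (insert c D)
    have cB: "c \<in> B" and DB: "D \<subseteq> B" using insert(4) by auto
    have split: "restr (insert c D)
        = restr D \<oplus>\<^bsub>free_mod R B\<^esub> (a c \<odot>\<^bsub>free_mod R B\<^esub> basis_vec R c)"
      unfolding free_mod_smult free_mod_add restr_def basis_vec_def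
      using aR cB insert(2) DB by (auto simp: fun_eq_iff)
    have term_carrier: "a c \<odot>\<^bsub>free_mod R B\<^esub> basis_vec R c \<in> carrier (free_mod R B)"
      by (rule free_mod_smult_closed[OF R.ring_axioms aR[OF cB] basis_vec_in_free_mod[OF R.ring_axioms cB]])
    have "h (restr (insert c D))
        = h (restr D) \<oplus>\<^bsub>N\<^esub> a c \<odot>\<^bsub>N\<^esub> h (basis_vec R c)"
      unfolding split linear_mapD(2)[OF h restr_carrier[OF DB] term_carrier]
        linear_mapD(3)[OF h aR[OF cB] basis_vec_in_free_mod[OF R.ring_axioms cB]] ..
    also have "\<dots> = (\<Oplus>\<^bsub>N\<^esub>c\<in>insert c D. a c \<odot>\<^bsub>N\<^esub> h (basis_vec R c))"
      using insert(1-3) DB aR hC cB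
      by (simp add: N.finsum_insert N.a_comm N.finsum_closed Pi_def subset_iff)
    finally show ?case .
  qed
  moreover have "restr B = a" using a0 by (auto simp: restr_def)
  ultimately show ?thesis using fin by auto
qed

lemma linear_map_free_mod_eqI:
  assumes R: "cring R" and N: "module R N" and h: "linear_map R (free_mod R B) N h"
    and k: "linear_map R (free_mod R B) N k"
    and fin: "finite B" and eq: "\<And>c. c \<in> B \<Longrightarrow> h (basis_vec R c) = k (basis_vec R c)"
    and a: "a \<in> carrier (free_mod R B)"
  shows "h a = k a"
proof -
  interpret N: module R N by fact
  have "(\<Oplus>\<^bsub>N\<^esub>c\<in>B. a c \<odot>\<^bsub>N\<^esub> h (basis_vec R c)) = (\<Oplus>\<^bsub>N\<^esub>c\<in>B. a c \<odot>\<^bsub>N\<^esub> k (basis_vec R c))"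
  proof (rule N.finsum_cong')
    show "(\<lambda>c. a c \<odot>\<^bsub>N\<^esub> k (basis_vec R c)) \<in> B \<rightarrow> carrier N"
      using a linear_mapD(1)[OF k basis_vec_in_free_mod[OF cring.axioms(1)[OF R]]]
      by (auto simp: free_mod_carrier)
  qed (use eq in auto)
  then show ?thesis
    using linear_map_free_mod_expansion[OF R N h fin a] linear_map_free_mod_expansion[OF R N k fin a] by simp
qed

lemma linear_map_free_sum:
  assumes N: "module R N" and fin: "finite B" and v: "v \<in> B \<rightarrow> carrier N"
  shows "linear_map R (free_mod R B) N (\<lambda>a. \<Oplus>\<^bsub>N\<^esub>c\<in>B. a c \<odot>\<^bsub>N\<^esub> v c)"
proof -
  interpret N: module R N by fact
  have vC: "\<And>c. c \<in> B \<Longrightarrow> v c \<in> carrier N" using v by auto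
  have term_carrier: "(\<lambda>c. a c \<odot>\<^bsub>N\<^esub> v c) \<in> B \<rightarrow> carrier N" if "a \<in> carrier (free_mod R B)" for a
    using that vC by (auto simp: free_mod_carrier)
  show ?thesis unfolding linear_map_def
  proof (intro conjI ballI)
    show "(\<lambda>a. \<Oplus>\<^bsub>N\<^esub>c\<in>B. a c \<odot>\<^bsub>N\<^esub> v c) \<in> carrier (free_mod R B) \<rightarrow> carrier N"
      using term_carrier by (simp add: N.finsum_closed)
  next
    fix a b assume a: "a \<in> carrier (free_mod R B)" and b: "b \<in> carrier (free_mod R B)"
    have "(\<Oplus>\<^bsub>N\<^esub>c\<in>B. (a \<oplus>\<^bsub>free_mod R B\<^esub> b) c \<odot>\<^bsub>N\<^esub> v c)
        = (\<Oplus>\<^bsub>N\<^esub>c\<in>B. a c \<odot>\<^bsub>N\<^esub> v c \<oplus>\<^bsub>N\<^esub> b c \<odot>\<^bsub>N\<^esub> v c)"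
      by (rule N.finsum_cong') (use a b vC in \<open>auto simp: free_mod_add free_mod_carrier N.smult_l_distr\<close>)
    also have "\<dots> = (\<Oplus>\<^bsub>N\<^esub>c\<in>B. a c \<odot>\<^bsub>N\<^esub> v c) \<oplus>\<^bsub>N\<^esub> (\<Oplus>\<^bsub>N\<^esub>c\<in>B. b c \<odot>\<^bsub>N\<^esub> v c)"
      by (rule N.finsum_addf[OF term_carrier[OF a] term_carrier[OF b]])
    finally show "(\<Oplus>\<^bsub>N\<^esub>c\<in>B. (a \<oplus>\<^bsub>free_mod R B\<^esub> b) c \<odot>\<^bsub>N\<^esub> v c)
        = (\<Oplus>\<^bsub>N\<^esub>c\<in>B. a c \<odot>\<^bsub>N\<^esub> v c) \<oplus>\<^bsub>N\<^esub> (\<Oplus>\<^bsub>N\<^esub>c\<in>B. b c \<odot>\<^bsub>N\<^esub> v c)" .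
  next
    fix r a assume r: "r \<in> carrier R" and a: "a \<in> carrier (free_mod R B)"
    have "(\<Oplus>\<^bsub>N\<^esub>c\<in>B. (r \<odot>\<^bsub>free_mod R B\<^esub> a) c \<odot>\<^bsub>N\<^esub> v c)
        = (\<Oplus>\<^bsub>N\<^esub>c\<in>B. r \<odot>\<^bsub>N\<^esub> (a c \<odot>\<^bsub>N\<^esub> v c))"
      by (rule N.finsum_cong') (use a vC r in \<open>auto simp: free_mod_smult free_mod_carrier N.smult_assoc1\<close>)
    also have "\<dots> = r \<odot>\<^bsub>N\<^esub> (\<Oplus>\<^bsub>N\<^esub>c\<in>B. a c \<odot>\<^bsub>N\<^esub> v c)"
      by (rule N.finsum_smult_ldistr[OF fin r term_carrier[OF a], symmetric])
    finally show "(\<Oplus>\<^bsub>N\<^esub>c\<in>B. (r \<odot>\<^bsub>free_mod R B\<^esub> a) c \<odot>\<^bsub>N\<^esub> v c)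
        = r \<odot>\<^bsub>N\<^esub> (\<Oplus>\<^bsub>N\<^esub>c\<in>B. a c \<odot>\<^bsub>N\<^esub> v c)" .
  qed
qed

lemma free_sum_basis_vec:
  assumes N: "module R N" and fin: "finite B" and v: "v \<in> B \<rightarrow> carrier N" and c: "c \<in> B"
  shows "(\<Oplus>\<^bsub>N\<^esub>c'\<in>B. basis_vec R c c' \<odot>\<^bsub>N\<^esub> v c') = v c"
proof -
  interpret N: module R N by fact
  have vC: "\<And>c. c \<in> B \<Longrightarrow> v c \<in> carrier N" using v by auto
  have "(\<Oplus>\<^bsub>N\<^esub>c'\<in>B. basis_vec R c c' \<odot>\<^bsub>N\<^esub> v c') = (\<Oplus>\<^bsub>N\<^esub>c'\<in>B. if c' = c then v c' else \<zero>\<^bsub>N\<^esub>)"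
    by (rule N.finsum_cong') (use vC in \<open>auto simp: basis_vec_def\<close>)
  also have "\<dots> = v c"
    by (rule N.add.finprod_singleton_swap[OF c fin]) (use v in auto)
  finally show ?thesis .
qed

lemma free_map_eq_finsum:
  assumes R: "ring R" and fin: "finite Bs" and a: "a \<in> carrier (free_mod R Bs)"
  shows "free_map R Bs g a y = (\<Oplus>\<^bsub>R\<^esub>x\<in>{x\<in>Bs. g x = y}. a x)"
proof -
  interpret R: ring R by fact
  show ?thesis unfolding free_map_def
  proof (rule R.add.finprod_mono_neutral_cong_left)
    show "finite {x \<in> Bs. g x = y}" using fin by simp
    show "a \<in> {x \<in> Bs. g x = y} \<rightarrow> carrier R" using a by (auto simp: free_mod_carrier)
  qed auto
qed

lemma free_map_in_free_mod:
  assumes R: "ring R" and fin: "finite Bs" and g: "g \<in> Bs \<rightarrow> B'" and a: "a \<in> carrier (free_mod R Bs)"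
  shows "free_map R Bs g a \<in> carrier (free_mod R B')"
proof -
  interpret R: ring R by fact
  have "free_map R Bs g a y \<in> carrier R" for y
    unfolding free_map_eq_finsum[OF R fin a] using a by (auto simp: free_mod_carrier intro: R.finsum_closed)
  moreover have vanish: "free_map R Bs g a y = \<zero>\<^bsub>R\<^esub>" if "y \<notin> g ` Bs" for y
  proof -
    have "{x\<in>Bs. g x = y} = {}" using that by auto
    then show ?thesis unfolding free_map_eq_finsum[OF R fin a] by (simp only: R.finsum_empty)
  qed
  moreover have "finite {y. free_map R Bs g a y \<noteq> \<zero>\<^bsub>R\<^esub>}"
    using vanish fin by (auto intro: finite_subset[of _ "g ` Bs"])
  moreover have "y \<notin> g ` Bs" if "y \<notin> B'" for y using g that by auto
  ultimately show ?thesis unfolding free_mod_carrier by blast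
qed

lemma free_map_add:
  assumes R: "ring R" and fin: "finite Bs" and a: "a \<in> carrier (free_mod R Bs)"
    and b: "b \<in> carrier (free_mod R Bs)"
  shows "free_map R Bs g (a \<oplus>\<^bsub>free_mod R Bs\<^esub> b) = free_map R Bs g a \<oplus>\<^bsub>free_mod R B'\<^esub> free_map R Bs g b"
proof (rule ext)
  interpret R: ring R by fact
  fix y
  have ab: "a \<oplus>\<^bsub>free_mod R Bs\<^esub> b \<in> carrier (free_mod R Bs)" by (rule free_mod_add_closed[OF R a b])
  have "a \<in> {x \<in> Bs. g x = y} \<rightarrow> carrier R" "b \<in> {x \<in> Bs. g x = y} \<rightarrow> carrier R"
    using a b by (auto simp: free_mod_carrier)
  then show "free_map R Bs g (a \<oplus>\<^bsub>free_mod R Bs\<^esub> b) y = (free_map R Bs g a \<oplus>\<^bsub>free_mod R B'\<^esub> free_map R Bs g b) y"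
    unfolding free_map_eq_finsum[OF R fin ab] free_map_eq_finsum[OF R fin a] free_map_eq_finsum[OF R fin b]
    by (simp add: R.finsum_addf free_mod_add)
qed

lemma free_map_smult:
  assumes R: "ring R" and fin: "finite Bs" and g: "g \<in> Bs \<rightarrow> B'" and r: "r \<in> carrier R"
    and a: "a \<in> carrier (free_mod R Bs)"
  shows "free_map R Bs g (r \<odot>\<^bsub>free_mod R Bs\<^esub> a) = r \<odot>\<^bsub>free_mod R B'\<^esub> free_map R Bs g a"
proof (rule ext)
  interpret R: ring R by fact
  fix y
  have ra: "r \<odot>\<^bsub>free_mod R Bs\<^esub> a \<in> carrier (free_mod R Bs)" by (rule free_mod_smult_closed[OF R r a])
  have aC: "a \<in> {x \<in> Bs. g x = y} \<rightarrow> carrier R" using a by (auto simp: free_mod_carrier)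
  show "free_map R Bs g (r \<odot>\<^bsub>free_mod R Bs\<^esub> a) y = (r \<odot>\<^bsub>free_mod R B'\<^esub> free_map R Bs g a) y"
  proof (cases "y \<in> B'")
    case True
    have "(\<Oplus>\<^bsub>R\<^esub>x\<in>{x \<in> Bs. g x = y}. (r \<odot>\<^bsub>free_mod R Bs\<^esub> a) x) = (\<Oplus>\<^bsub>R\<^esub>x\<in>{x \<in> Bs. g x = y}. r \<otimes>\<^bsub>R\<^esub> a x)"
      by (rule R.finsum_cong') (use aC r in \<open>auto simp: free_mod_smult\<close>)
    also have "\<dots> = r \<otimes>\<^bsub>R\<^esub> (\<Oplus>\<^bsub>R\<^esub>x\<in>{x \<in> Bs. g x = y}. a x)"
      using R.finsum_rdistr[OF _ r aC] fin by simp
    finally show ?thesis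
      unfolding free_map_eq_finsum[OF R fin ra] free_map_eq_finsum[OF R fin a] using True
      by (simp add: free_mod_smult)
  next
    case False
    then have "{x\<in>Bs. g x = y} = {}" using g by auto
    then show ?thesis unfolding free_map_eq_finsum[OF R fin ra]
      using False by (simp only: R.finsum_empty free_mod_smult if_False)
  qed
qed

lemma free_map_basis_vec:
  assumes R: "ring R" and fin: "finite Bs" and c: "c \<in> Bs"
  shows "free_map R Bs g (basis_vec R c) = basis_vec R (g c)"
proof (rule ext)
  interpret R: ring R by fact
  fix y
  have "(\<Oplus>\<^bsub>R\<^esub>x\<in>{x \<in> Bs. g x = y}. basis_vec R c x) = (if g c = y then \<one>\<^bsub>R\<^esub> else \<zero>\<^bsub>R\<^esub>)"
  proof (cases "g c = y")
    case True
    have "(\<Oplus>\<^bsub>R\<^esub>x\<in>{x \<in> Bs. g x = y}. basis_vec R c x)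
        = (\<Oplus>\<^bsub>R\<^esub>x\<in>{x \<in> Bs. g x = y}. if x = c then \<one>\<^bsub>R\<^esub> else \<zero>\<^bsub>R\<^esub>)"
      by (simp add: basis_vec_def)
    also have "\<dots> = \<one>\<^bsub>R\<^esub>"
      by (rule R.add.finprod_singleton_swap) (use True c fin in auto)
    finally show ?thesis using True by simp
  next
    case False
    have "(\<Oplus>\<^bsub>R\<^esub>x\<in>{x \<in> Bs. g x = y}. basis_vec R c x) = (\<Oplus>\<^bsub>R\<^esub>x\<in>{x \<in> Bs. g x = y}. \<zero>\<^bsub>R\<^esub>)"
      by (rule R.finsum_cong') (use False in \<open>auto simp: basis_vec_def\<close>)
    then show ?thesis using False by simp
  qed
  then show "free_map R Bs g (basis_vec R c) y = basis_vec R (g c) y"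
    unfolding free_map_eq_finsum[OF R fin basis_vec_in_free_mod[OF R c]] by (simp add: basis_vec_def)
qed

lemma linear_map_free_map:
  assumes R: "ring R" and fin: "finite Bs" and g: "g \<in> Bs \<rightarrow> B'"
  shows "linear_map R (free_mod R Bs) (free_mod R B') (free_map R Bs g)"
  unfolding linear_map_def
  using free_map_in_free_mod[OF R fin g] free_map_add[OF R fin] free_map_smult[OF R fin g] by auto

lemma Inl_in_Plus_iff [simp]: "Inl a \<in> A <+> B \<longleftrightarrow> a \<in> A"
  and Inr_in_Plus_iff [simp]: "Inr b \<in> A <+> B \<longleftrightarrow> b \<in> B"
  by auto

lemma free_mod_coeffs:
  assumes "ring R" "a \<in> carrier (free_mod R B)"
  shows "a c \<in> carrier R" "c \<notin> B \<Longrightarrow> a c = \<zero>\<^bsub>R\<^esub>" "finite {c. a c \<noteq> \<zero>\<^bsub>R\<^esub>}"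
  using assms ring.ring_simprules(2)[OF assms(1)] by (cases "c \<in> B"; auto simp: free_mod_carrier)+

lemma linear_map_free_mod_Plus:
  assumes R: "cring R"
    and h1: "linear_map R A (free_mod R B1) h1" and h2: "linear_map R A (free_mod R B2) h2"
  shows "linear_map R A (free_mod R (B1 <+> B2))
           (\<lambda>a z. case z of Inl c \<Rightarrow> \<ominus>\<^bsub>R\<^esub> h1 a c | Inr c \<Rightarrow> h2 a c)"
proof -
  interpret R: cring R by fact
  let ?h = "\<lambda>a z. case z of Inl c \<Rightarrow> \<ominus>\<^bsub>R\<^esub> h1 a c | Inr c \<Rightarrow> h2 a c"
  note c1 = free_mod_coeffs[OF R.ring_axioms linear_mapD(1)[OF h1]]
  note c2 = free_mod_coeffs[OF R.ring_axioms linear_mapD(1)[OF h2]]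
  have "?h a \<in> carrier (free_mod R (B1 <+> B2))" if a: "a \<in> carrier A" for a
  proof -
    have "{z. ?h a z \<noteq> \<zero>\<^bsub>R\<^esub>} \<subseteq> Inl ` {c. h1 a c \<noteq> \<zero>\<^bsub>R\<^esub>} \<union> Inr ` {c. h2 a c \<noteq> \<zero>\<^bsub>R\<^esub>}"
    proof
      fix z assume "z \<in> {z. ?h a z \<noteq> \<zero>\<^bsub>R\<^esub>}"
      then show "z \<in> Inl ` {c. h1 a c \<noteq> \<zero>\<^bsub>R\<^esub>} \<union> Inr ` {c. h2 a c \<noteq> \<zero>\<^bsub>R\<^esub>}" by (cases z) auto
    qed
    then have "finite {z. ?h a z \<noteq> \<zero>\<^bsub>R\<^esub>}"
      using c1(3)[OF a] c2(3)[OF a] by (metis finite_Un finite_imageI finite_subset)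
    then show ?thesis
      unfolding free_mod_carrier using c1(1,2)[OF a] c2(1,2)[OF a] by (auto split: sum.splits)
  qed
  moreover have "?h (a \<oplus>\<^bsub>A\<^esub> b) = ?h a \<oplus>\<^bsub>free_mod R (B1 <+> B2)\<^esub> ?h b"
    if a: "a \<in> carrier A" and b: "b \<in> carrier A" for a b
    using linear_mapD(2)[OF h1 a b] linear_mapD(2)[OF h2 a b] c1(1)[OF a] c1(1)[OF b]
    by (auto simp: fun_eq_iff free_mod_add R.minus_add split: sum.splits)
  moreover have "?h (r \<odot>\<^bsub>A\<^esub> a) = r \<odot>\<^bsub>free_mod R (B1 <+> B2)\<^esub> ?h a"
    if r: "r \<in> carrier R" and a: "a \<in> carrier A" for r a
    using linear_mapD(3)[OF h1 r a] linear_mapD(3)[OF h2 r a] c1(1,2)[OF a] c2(2)[OF a] r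
    by (auto simp: fun_eq_iff free_mod_smult R.r_minus split: sum.splits)
  ultimately show ?thesis unfolding linear_map_def by blast
qed

lemma a_r_coset_submod: "a_r_coset (submod A Y) N x = a_r_coset A N x"
  unfolding a_r_coset_def' by (simp add: submod_def)

section \<open>Fusion systems\<close>

lemma InjHomD:
  assumes "\<phi> \<in> InjHom G P Q"
  shows "\<phi> \<in> extensional P" "\<phi> ` P \<subseteq> Q" "inj_on \<phi> P"
    "\<And>x y. x \<in> P \<Longrightarrow> y \<in> P \<Longrightarrow> \<phi> (x \<otimes>\<^bsub>G\<^esub> y) = \<phi> x \<otimes>\<^bsub>G\<^esub> \<phi> y"
  using assms unfolding InjHom_def hom_def by auto

lemma InjHomI:
  assumes "\<phi> \<in> extensional P" "\<phi> ` P \<subseteq> Q" "inj_on \<phi> P"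
    "\<And>x y. x \<in> P \<Longrightarrow> y \<in> P \<Longrightarrow> \<phi> (x \<otimes>\<^bsub>G\<^esub> y) = \<phi> x \<otimes>\<^bsub>G\<^esub> \<phi> y"
  shows "\<phi> \<in> InjHom G P Q"
  using assms unfolding InjHom_def hom_def by auto

lemma subgrpsD: "P \<in> subgrps G T \<Longrightarrow> P \<subseteq> T" "P \<in> subgrps G T \<Longrightarrow> subgroup P G"
  unfolding subgrps_def by auto

lemma comp_on_incl:
  assumes "\<phi> \<in> extensional P" "\<phi> ` P \<subseteq> Q"
  shows "comp_on P (restrict id Q) \<phi> = \<phi>"
  unfolding comp_on_def using assms by (intro extensionalityI[OF _ assms(1)]) auto

lemma comp_on_id:
  assumes "\<psi> \<in> extensional P"
  shows "comp_on P \<psi> (restrict id P) = \<psi>"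
  unfolding comp_on_def using assms by (intro extensionalityI[OF _ assms(1)]) auto

lemma conjg_one:
  assumes "group G" "P \<subseteq> carrier G"
  shows "conjg G \<one>\<^bsub>G\<^esub> P = restrict id P"
proof -
  interpret group G by fact
  show ?thesis unfolding conjg_def using assms(2) by (intro restrict_ext) auto
qed

lemma conj_mult:
  fixes G (structure)
  assumes "group G" "g \<in> carrier G" "x \<in> carrier G" "y \<in> carrier G"
  shows "g \<otimes> (x \<otimes> y) \<otimes> inv g = (g \<otimes> x \<otimes> inv g) \<otimes> (g \<otimes> y \<otimes> inv g)"
proof -
  interpret group G by fact
  have "inv g \<otimes> (g \<otimes> (y \<otimes> inv g)) = y \<otimes> inv g"
    using assms by (simp add: m_assoc[symmetric])
  then show ?thesis using assms by (simp add: m_assoc)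
qed

lemma fusion_system_subgrps:
  assumes "fusion_system G T H" "\<phi> \<in> H P Q"
  shows "P \<in> subgrps G T" "Q \<in> subgrps G T"
  using assms unfolding fusion_system_def by blast+

lemma fusion_system_InjHom:
  assumes "fusion_system G T H" "\<phi> \<in> H P Q"
  shows "\<phi> \<in> InjHom G P Q"
  using assms fusion_system_subgrps[OF assms] unfolding fusion_system_def by blast

lemma fusion_system_comp:
  assumes "fusion_system G T H" "\<phi> \<in> H P Q" "\<psi> \<in> H Q R"
  shows "comp_on P \<psi> \<phi> \<in> H P R"
  using assms unfolding fusion_system_def by blast

lemma fusion_system_image:
  assumes "fusion_system G T H" "\<phi> \<in> H P Q"
  shows "\<phi> \<in> H P (\<phi> ` P)" "\<phi> ` P \<in> subgrps G T"
    "restrict (inv_into P \<phi>) (\<phi> ` P) \<in> H (\<phi> ` P) P"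
proof -
  show onto: "\<phi> \<in> H P (\<phi> ` P)" using assms unfolding fusion_system_def by blast
  show "\<phi> ` P \<in> subgrps G T" using fusion_system_subgrps(2)[OF assms(1) onto] .
  show "restrict (inv_into P \<phi>) (\<phi> ` P) \<in> H (\<phi> ` P) P" using assms unfolding fusion_system_def by blast
qed

lemma fusion_system_incl:
  assumes G: "group G" and H: "fusion_system G T H" and PQ: "P \<subseteq> Q"
    and P: "P \<in> subgrps G T" and Q: "Q \<in> subgrps G T"
  shows "restrict id P \<in> H P Q"
proof -
  interpret group G by fact
  have T: "subgroup T G" using H unfolding fusion_system_def by blast
  have Pc: "P \<subseteq> carrier G" using P subgroup.subset unfolding subgrps_def by blast
  have "conjg G \<one>\<^bsub>G\<^esub> P \<in> HomT G T P Q"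
    unfolding HomT_def using conjg_one[OF G Pc] PQ subgroup.one_closed[OF T]
    by (intro CollectI exI[of _ "\<one>\<^bsub>G\<^esub>"]) auto
  then show ?thesis using H P Q conjg_one[OF G Pc] unfolding fusion_system_def by auto
qed

lemma fusion_system_codomain_mono:
  assumes G: "group G" and H: "fusion_system G T H" and \<phi>: "\<phi> \<in> H P Q" and QQ': "Q \<subseteq> Q'"
    and Q': "Q' \<in> subgrps G T"
  shows "\<phi> \<in> H P Q'"
proof -
  have "restrict id Q \<in> H Q Q'"
    using fusion_system_incl[OF G H QQ' fusion_system_subgrps(2)[OF H \<phi>] Q'] .
  from fusion_system_comp[OF H \<phi> this] show ?thesis
    using comp_on_incl InjHomD(1,2)[OF fusion_system_InjHom[OF H \<phi>]] by metis
qed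

lemma fusion_system_restrict:
  assumes G: "group G" and H: "fusion_system G T H" and \<theta>: "\<theta> \<in> H U Y" and U'U: "U' \<subseteq> U"
    and U': "U' \<in> subgrps G T"
  shows "restrict \<theta> U' \<in> H U' (\<theta> ` U')"
proof -
  have "restrict id U' \<in> H U' U"
    using fusion_system_incl[OF G H U'U U' fusion_system_subgrps(1)[OF H \<theta>]] .
  from fusion_system_comp[OF H this \<theta>] have "comp_on U' \<theta> (restrict id U') \<in> H U' Y" .
  moreover have "comp_on U' \<theta> (restrict id U') = restrict \<theta> U'"
    unfolding comp_on_def by auto
  ultimately have "restrict \<theta> U' \<in> H U' Y" by simp
  then show ?thesis using fusion_system_image(1)[OF H] by fastforce
qed

text \<open>The largest fusion system over \<^term>\<open>carrier G\<close>; it makes the intersection defining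
  \<^const>\<open>generated_fs\<close> range over a nonempty family.\<close>

definition inj_fs :: "('a, 'b) monoid_scheme \<Rightarrow> 'a set \<Rightarrow> 'a set \<Rightarrow> ('a \<Rightarrow> 'a) set" where
  "inj_fs G P Q = (if P \<in> subgrps G (carrier G) \<and> Q \<in> subgrps G (carrier G) then InjHom G P Q else {})"

lemma HomT_subset_InjHom:
  fixes G (structure)
  assumes G: "group G" and P: "P \<in> subgrps G (carrier G)"
  shows "HomT G (carrier G) P Q \<subseteq> InjHom G P Q"
proof
  interpret group G by fact
  have Pc: "P \<subseteq> carrier G" using subgrpsD(1)[OF P] .
  fix \<phi> assume "\<phi> \<in> HomT G (carrier G) P Q"
  then obtain g where g: "g \<in> carrier G" "conjg G g P ` P \<subseteq> Q" and \<phi>: "\<phi> = conjg G g P"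
    unfolding HomT_def by auto
  show "\<phi> \<in> InjHom G P Q"
  proof (rule InjHomI)
    show "\<phi> \<in> extensional P" unfolding \<phi> conjg_def by simp
    show "\<phi> ` P \<subseteq> Q" using g \<phi> by simp
    show "inj_on \<phi> P"
      unfolding \<phi> conjg_def inj_on_def using g Pc by (auto simp: subset_iff)
    fix x y assume "x \<in> P" "y \<in> P"
    moreover then have "x \<otimes> y \<in> P" using subgroup.m_closed[OF subgrpsD(2)[OF P]] by blast
    ultimately show "\<phi> (x \<otimes> y) = \<phi> x \<otimes> \<phi> y"
      unfolding \<phi> conjg_def using conj_mult[OF G g(1)] Pc by auto
  qed
qed

lemma InjHom_image_subgrps:
  fixes G (structure)
  assumes G: "group G" and P: "P \<in> subgrps G (carrier G)" and \<phi>: "\<phi> \<in> InjHom G P Q"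
    and Q: "Q \<in> subgrps G (carrier G)"
  shows "\<phi> ` P \<in> subgrps G (carrier G)"
proof -
  have "group (G\<lparr>carrier := P\<rparr>)" by (rule subgroup.subgroup_is_group[OF subgrpsD(2)[OF P] G])
  moreover have "\<phi> \<in> hom (G\<lparr>carrier := P\<rparr>) G"
    using InjHomD[OF \<phi>] subgrpsD(1)[OF Q] unfolding hom_def by auto
  ultimately have "group_hom (G\<lparr>carrier := P\<rparr>) G \<phi>"
    using G unfolding group_hom_def group_hom_axioms_def by auto
  then have "subgroup (\<phi> ` P) G" using group_hom.img_is_subgroup by fastforce
  then show ?thesis using InjHomD(2)[OF \<phi>] subgrpsD(1)[OF Q] unfolding subgrps_def by auto
qed

lemma comp_on_InjHom:
  fixes G (structure)
  assumes P: "P \<in> subgrps G T" and \<phi>: "\<phi> \<in> InjHom G P Q" and \<psi>: "\<psi> \<in> InjHom G Q R"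
  shows "comp_on P \<psi> \<phi> \<in> InjHom G P R"
proof (rule InjHomI)
  show "comp_on P \<psi> \<phi> \<in> extensional P" unfolding comp_on_def by simp
  show "comp_on P \<psi> \<phi> ` P \<subseteq> R" unfolding comp_on_def using InjHomD(2)[OF \<phi>] InjHomD(2)[OF \<psi>] by auto
  show "inj_on (comp_on P \<psi> \<phi>) P" unfolding comp_on_def inj_on_def
    using InjHomD(2,3)[OF \<phi>] InjHomD(3)[OF \<psi>] by (auto simp: inj_on_def subset_iff)
  fix x y assume xy: "x \<in> P" "y \<in> P"
  then have "x \<otimes> y \<in> P" using subgroup.m_closed[OF subgrpsD(2)[OF P]] by blast
  then show "comp_on P \<psi> \<phi> (x \<otimes> y) = comp_on P \<psi> \<phi> x \<otimes> comp_on P \<psi> \<phi> y"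
    unfolding comp_on_def using xy InjHomD(2,4)[OF \<phi>] InjHomD(4)[OF \<psi>] by (auto simp: image_subset_iff)
qed

lemma inv_into_InjHom:
  fixes G (structure)
  assumes P: "P \<in> subgrps G T" and \<phi>: "\<phi> \<in> InjHom G P Q"
  shows "restrict (inv_into P \<phi>) (\<phi> ` P) \<in> InjHom G (\<phi> ` P) P"
proof (rule InjHomI)
  show "restrict (inv_into P \<phi>) (\<phi> ` P) \<in> extensional (\<phi> ` P)" by simp
  show "restrict (inv_into P \<phi>) (\<phi> ` P) ` \<phi> ` P \<subseteq> P"
    using InjHomD(3)[OF \<phi>] by auto
  show "inj_on (restrict (inv_into P \<phi>) (\<phi> ` P)) (\<phi> ` P)"
    using inj_on_inv_into[of "\<phi> ` P" \<phi> P] by (simp add: inj_on_def)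
  fix x y assume "x \<in> \<phi> ` P" "y \<in> \<phi> ` P"
  then obtain a b where ab: "a \<in> P" "b \<in> P" "x = \<phi> a" "y = \<phi> b" by auto
  have abP: "a \<otimes> b \<in> P" using ab subgroup.m_closed[OF subgrpsD(2)[OF P]] by blast
  have "x \<otimes> y = \<phi> (a \<otimes> b)" using ab InjHomD(4)[OF \<phi>] by simp
  moreover have "\<phi> (a \<otimes> b) \<in> \<phi> ` P" using abP by simp
  ultimately show "restrict (inv_into P \<phi>) (\<phi> ` P) (x \<otimes> y)
      = restrict (inv_into P \<phi>) (\<phi> ` P) x \<otimes> restrict (inv_into P \<phi>) (\<phi> ` P) y"
    using ab abP InjHomD(3)[OF \<phi>] by (simp add: inv_into_f_f)
qed

lemma fusion_system_inj_fs:
  assumes G: "group G"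
  shows "fusion_system G (carrier G) (inj_fs G)"
  unfolding fusion_system_def
proof (intro conjI allI impI)
  show "subgroup (carrier G) G" by (rule group.subgroup_self[OF G])
next
  fix P Q assume "P \<in> subgrps G (carrier G) \<and> Q \<in> subgrps G (carrier G)"
  then show "HomT G (carrier G) P Q \<subseteq> inj_fs G P Q" "inj_fs G P Q \<subseteq> InjHom G P Q"
    using HomT_subset_InjHom[OF G] unfolding inj_fs_def by auto
next
  fix P Q :: "'a set" assume "\<not> (P \<in> subgrps G (carrier G) \<and> Q \<in> subgrps G (carrier G))"
  then show "inj_fs G P Q = {}" unfolding inj_fs_def by auto
next
  fix P Q R \<phi> \<psi> assume "\<phi> \<in> inj_fs G P Q" "\<psi> \<in> inj_fs G Q R"
  then show "comp_on P \<psi> \<phi> \<in> inj_fs G P R"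
    using comp_on_InjHom unfolding inj_fs_def by (metis empty_iff)
next
  fix P Q \<phi> assume "\<phi> \<in> inj_fs G P Q"
  then have PQ: "P \<in> subgrps G (carrier G)" "Q \<in> subgrps G (carrier G)" and \<phi>: "\<phi> \<in> InjHom G P Q"
    unfolding inj_fs_def by (auto split: if_splits)
  have "\<phi> ` P \<in> subgrps G (carrier G)" by (rule InjHom_image_subgrps[OF G PQ(1) \<phi> PQ(2)])
  moreover have "\<phi> \<in> InjHom G P (\<phi> ` P)"
    using InjHomD[OF \<phi>] by (intro InjHomI) auto
  ultimately show "\<phi> \<in> inj_fs G P (\<phi> ` P)" "restrict (inv_into P \<phi>) (\<phi> ` P) \<in> inj_fs G (\<phi> ` P) P"
    using PQ inv_into_InjHom[OF PQ(1) \<phi>] unfolding inj_fs_def by simp_all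
qed

lemma mem_generated_fs:
  "\<phi> \<in> generated_fs G F1 F2 P Q \<longleftrightarrow>
     (\<forall>H. fusion_system G (carrier G) H \<and> subsystem F1 H \<and> subsystem F2 H \<longrightarrow> \<phi> \<in> H P Q)"
  unfolding generated_fs_def by blast

lemma subsystem_generated_fs:
  "subsystem F1 (generated_fs G F1 F2)" "subsystem F2 (generated_fs G F1 F2)"
  unfolding subsystem_def generated_fs_def by blast+

lemma subsystem_inj_fs:
  assumes H: "fusion_system G T H"
  shows "subsystem H (inj_fs G)"
  unfolding subsystem_def
proof (intro allI subsetI)
  fix P Q \<phi> assume \<phi>: "\<phi> \<in> H P Q"
  have "subgrps G T \<subseteq> subgrps G (carrier G)"
    using H subgroup.subset unfolding fusion_system_def subgrps_def by fastforce
  then have "P \<in> subgrps G (carrier G)" "Q \<in> subgrps G (carrier G)"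
    using fusion_system_subgrps[OF H \<phi>] by auto
  then show "\<phi> \<in> inj_fs G P Q" using fusion_system_InjHom[OF H \<phi>] unfolding inj_fs_def by simp
qed

lemma fusion_system_generated_fs:
  assumes G: "group G" and F1: "fusion_system G T1 F1" and F2: "fusion_system G T2 F2"
  shows "fusion_system G (carrier G) (generated_fs G F1 F2)"
proof -
  let ?F = "generated_fs G F1 F2"
  have F_inj_fs: "?F P Q \<subseteq> inj_fs G P Q" for P Q
  proof
    fix \<phi> assume "\<phi> \<in> ?F P Q"
    then show "\<phi> \<in> inj_fs G P Q"
      using fusion_system_inj_fs[OF G] subsystem_inj_fs[OF F1] subsystem_inj_fs[OF F2]
      unfolding mem_generated_fs by blast
  qed
  show ?thesis unfolding fusion_system_def
  proof (intro conjI allI impI)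
    show "subgroup (carrier G) G" by (rule group.subgroup_self[OF G])
  next
    fix P Q assume PQ: "P \<in> subgrps G (carrier G) \<and> Q \<in> subgrps G (carrier G)"
    show "HomT G (carrier G) P Q \<subseteq> ?F P Q"
    proof
      fix \<phi> assume "\<phi> \<in> HomT G (carrier G) P Q"
      then show "\<phi> \<in> ?F P Q" using PQ unfolding mem_generated_fs fusion_system_def by blast
    qed
    show "?F P Q \<subseteq> InjHom G P Q" using F_inj_fs[of P Q] PQ unfolding inj_fs_def by simp
  next
    fix P Q :: "'a set" assume "\<not> (P \<in> subgrps G (carrier G) \<and> Q \<in> subgrps G (carrier G))"
    then show "?F P Q = {}" using F_inj_fs[of P Q] unfolding inj_fs_def by auto
  next
    fix P Q R \<phi> \<psi> assume "\<phi> \<in> ?F P Q" "\<psi> \<in> ?F Q R"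
    then show "comp_on P \<psi> \<phi> \<in> ?F P R" unfolding mem_generated_fs using fusion_system_comp by blast
  next
    fix P Q \<phi> assume "\<phi> \<in> ?F P Q"
    then show "\<phi> \<in> ?F P (\<phi> ` P)" "restrict (inv_into P \<phi>) (\<phi> ` P) \<in> ?F (\<phi> ` P) P"
      unfolding mem_generated_fs using fusion_system_image by blast+
  qed
qed

section \<open>Representation classes\<close>

locale rep_classes =
  fixes G :: "('a, 'b) monoid_scheme" and F H :: "'a set \<Rightarrow> 'a set \<Rightarrow> ('a \<Rightarrow> 'a) set" and TH :: "'a set"
  assumes grp: "group G" and F_fs: "fusion_system G (carrier G) F" and H_fs: "fusion_system G TH H"
    and H_sub: "subsystem H F"
begin

abbreviation "cls P \<phi> \<equiv> rep_cls F H TH P \<phi>"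

lemma H_in_F: "\<phi> \<in> H P Q \<Longrightarrow> \<phi> \<in> F P Q"
  using H_sub unfolding subsystem_def by blast

lemma TH_subgrps: "TH \<in> subgrps G (carrier G)" "TH \<in> subgrps G TH"
proof -
  have "subgroup TH G" using H_fs unfolding fusion_system_def by (rule conjunct1)
  then show "TH \<in> subgrps G (carrier G)" "TH \<in> subgrps G TH"
    unfolding subgrps_def using subgroup.subset by auto
qed

lemma F_image_subgrps:
  assumes "\<phi> \<in> F P TH"
  shows "\<phi> ` P \<in> subgrps G TH"
  using subgrpsD(2)[OF fusion_system_image(2)[OF F_fs assms]] InjHomD(2)[OF fusion_system_InjHom[OF F_fs assms]]
  unfolding subgrps_def by simp

lemma incl_in_H:
  assumes "P \<in> subgrps G TH"
  shows "restrict id P \<in> H P TH"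
  using fusion_system_incl[OF grp H_fs subgrpsD(1)[OF assms] assms TH_subgrps(2)] .

lemma incl_TH_in_F: "restrict id TH \<in> F TH TH"
  using fusion_system_incl[OF grp F_fs subset_refl TH_subgrps(1) TH_subgrps(1)] .

lemma comp_on_incl_TH:
  assumes "\<phi> \<in> F P TH"
  shows "comp_on P (restrict id TH) \<phi> = \<phi>"
  using comp_on_incl InjHomD(1,2)[OF fusion_system_InjHom[OF F_fs assms]] by blast

lemma mem_rep_cls:
  "\<psi> \<in> cls P \<phi> \<longleftrightarrow> \<psi> \<in> F P TH \<and>
     (\<exists>\<theta>\<in>H (\<phi> ` P) (\<psi> ` P). bij_betw \<theta> (\<phi> ` P) (\<psi> ` P) \<and> \<psi> = comp_on P \<theta> \<phi>)"
  unfolding rep_cls_def by simp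

lemma rep_clsD: "\<psi> \<in> cls P \<phi> \<Longrightarrow> \<psi> \<in> F P TH"
  unfolding mem_rep_cls by blast

lemma rep_cls_refl:
  assumes \<phi>: "\<phi> \<in> F P TH"
  shows "\<phi> \<in> cls P \<phi>"
proof -
  let ?U = "\<phi> ` P"
  have U: "?U \<in> subgrps G TH" by (rule F_image_subgrps[OF \<phi>])
  have "restrict id ?U \<in> H ?U ?U" by (rule fusion_system_incl[OF grp H_fs subset_refl U U])
  moreover have "bij_betw (restrict id ?U) ?U ?U"
    using bij_betw_cong[of ?U "restrict id ?U" id ?U] bij_betw_id by simp
  moreover have "\<phi> = comp_on P (restrict id ?U) \<phi>"
    using comp_on_incl[OF InjHomD(1)[OF fusion_system_InjHom[OF F_fs \<phi>]] subset_refl] by simp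
  ultimately show ?thesis unfolding mem_rep_cls using \<phi> by blast
qed

lemma rep_cls_sym:
  assumes \<phi>: "\<phi> \<in> F P TH" and \<psi>: "\<psi> \<in> cls P \<phi>"
  shows "\<phi> \<in> cls P \<psi>"
proof -
  obtain \<theta> where \<theta>: "\<theta> \<in> H (\<phi> ` P) (\<psi> ` P)" "bij_betw \<theta> (\<phi> ` P) (\<psi> ` P)" "\<psi> = comp_on P \<theta> \<phi>"
    using \<psi> unfolding mem_rep_cls by blast
  let ?\<theta>' = "restrict (inv_into (\<phi> ` P) \<theta>) (\<psi> ` P)"
  have onto: "\<theta> ` \<phi> ` P = \<psi> ` P" using bij_betw_imp_surj_on[OF \<theta>(2)] .
  have "?\<theta>' \<in> H (\<psi> ` P) (\<phi> ` P)" using fusion_system_image(3)[OF H_fs \<theta>(1)] onto by simp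
  moreover have "bij_betw ?\<theta>' (\<psi> ` P) (\<phi> ` P)"
    using bij_betw_inv_into[OF \<theta>(2)] by (simp add: bij_betw_def inj_on_def)
  moreover have "\<phi> = comp_on P ?\<theta>' \<psi>"
  proof (rule extensionalityI)
    show "\<phi> \<in> extensional P" using InjHomD(1)[OF fusion_system_InjHom[OF F_fs \<phi>]] .
    show "comp_on P ?\<theta>' \<psi> \<in> extensional P" unfolding comp_on_def by simp
    fix x assume "x \<in> P"
    then show "\<phi> x = comp_on P ?\<theta>' \<psi> x"
      using \<theta>(3) inv_into_f_f[OF bij_betw_imp_inj_on[OF \<theta>(2)]] unfolding comp_on_def by simp
  qed
  ultimately show ?thesis unfolding mem_rep_cls using \<phi> by blast
qed

lemma rep_cls_trans:
  assumes \<psi>: "\<psi> \<in> cls P \<phi>" and \<chi>: "\<chi> \<in> cls P \<psi>"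
  shows "\<chi> \<in> cls P \<phi>"
proof -
  obtain \<theta>1 where \<theta>1: "\<theta>1 \<in> H (\<phi> ` P) (\<psi> ` P)" "bij_betw \<theta>1 (\<phi> ` P) (\<psi> ` P)" "\<psi> = comp_on P \<theta>1 \<phi>"
    using \<psi> unfolding mem_rep_cls by blast
  obtain \<theta>2 where \<theta>2: "\<theta>2 \<in> H (\<psi> ` P) (\<chi> ` P)" "bij_betw \<theta>2 (\<psi> ` P) (\<chi> ` P)" "\<chi> = comp_on P \<theta>2 \<psi>"
    using \<chi> unfolding mem_rep_cls by blast
  have "comp_on (\<phi> ` P) \<theta>2 \<theta>1 \<in> H (\<phi> ` P) (\<chi> ` P)" by (rule fusion_system_comp[OF H_fs \<theta>1(1) \<theta>2(1)])
  moreover have "bij_betw (comp_on (\<phi> ` P) \<theta>2 \<theta>1) (\<phi> ` P) (\<chi> ` P)"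
    using bij_betw_trans[OF \<theta>1(2) \<theta>2(2)] unfolding comp_on_def
    by (simp add: bij_betw_def inj_on_def image_comp)
  moreover have "\<chi> = comp_on P (comp_on (\<phi> ` P) \<theta>2 \<theta>1) \<phi>"
    using \<theta>1(3) \<theta>2(3) unfolding comp_on_def by (auto simp: fun_eq_iff)
  ultimately show ?thesis unfolding mem_rep_cls using rep_clsD[OF \<chi>] by blast
qed

lemma rep_cls_eq:
  assumes \<phi>: "\<phi> \<in> F P TH" and \<psi>: "\<psi> \<in> cls P \<phi>"
  shows "cls P \<psi> = cls P \<phi>"
  using rep_cls_trans[OF \<psi>] rep_cls_trans[OF rep_cls_sym[OF \<phi> \<psi>]] by blast

lemma rep_cls_SOME:
  assumes "\<phi> \<in> F P TH"
  shows "(SOME \<psi>. \<psi> \<in> cls P \<phi>) \<in> cls P \<phi>"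
  by (rule someI[of "\<lambda>\<psi>. \<psi> \<in> cls P \<phi>", OF rep_cls_refl[OF assms]])

lemma rep_cls_in_Rep: "\<phi> \<in> F P TH \<Longrightarrow> cls P \<phi> \<in> Rep F H TH P"
  unfolding Rep_def by simp

lemma Rep_SOME:
  assumes "c \<in> Rep F H TH P"
  shows "(SOME \<phi>. \<phi> \<in> c) \<in> F P TH" "c = cls P (SOME \<phi>. \<phi> \<in> c)"
proof -
  obtain \<phi> where \<phi>: "\<phi> \<in> F P TH" "c = cls P \<phi>" using assms unfolding Rep_def by blast
  then have "(SOME \<phi>. \<phi> \<in> c) \<in> cls P \<phi>" using rep_cls_SOME by simp
  then show "(SOME \<phi>. \<phi> \<in> c) \<in> F P TH" "c = cls P (SOME \<phi>. \<phi> \<in> c)"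
    using rep_clsD rep_cls_eq[OF \<phi>(1)] \<phi>(2) by auto
qed

lemma Rep_cases:
  assumes "c \<in> Rep F H TH P"
  obtains \<phi> where "\<phi> \<in> F P TH" "c = cls P \<phi>"
  using Rep_SOME[OF assms] by blast

text \<open>From \<open>\<psi> = \<theta> \<phi>\<close> one gets \<open>\<psi> \<rho> = \<theta>|\<^bsub>\<phi> \<rho> P\<^esub> (\<phi> \<rho>)\<close>.\<close>

lemma rep_cls_comp_right:
  assumes \<psi>: "\<psi> \<in> cls Q \<phi>" and \<phi>: "\<phi> \<in> F Q TH" and \<rho>: "\<rho> \<in> F P Q"
  shows "comp_on P \<psi> \<rho> \<in> cls P (comp_on P \<phi> \<rho>)"
proof -
  obtain \<theta> where \<theta>: "\<theta> \<in> H (\<phi> ` Q) (\<psi> ` Q)" "bij_betw \<theta> (\<phi> ` Q) (\<psi> ` Q)" "\<psi> = comp_on Q \<theta> \<phi>"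
    using \<psi> unfolding mem_rep_cls by blast
  let ?\<phi>\<rho> = "comp_on P \<phi> \<rho>" and ?\<psi>\<rho> = "comp_on P \<psi> \<rho>"
  have \<rho>P: "\<rho> ` P \<subseteq> Q" using InjHomD(2)[OF fusion_system_InjHom[OF F_fs \<rho>]] .
  have sub: "?\<phi>\<rho> ` P \<subseteq> \<phi> ` Q" unfolding comp_on_def using \<rho>P by auto
  have val: "?\<psi>\<rho> x = \<theta> (?\<phi>\<rho> x)" if "x \<in> P" for x
    using that \<rho>P \<theta>(3) unfolding comp_on_def by auto
  then have img: "?\<psi>\<rho> ` P = \<theta> ` ?\<phi>\<rho> ` P" by (auto simp: image_iff)
  have "restrict \<theta> (?\<phi>\<rho> ` P) \<in> H (?\<phi>\<rho> ` P) (?\<psi>\<rho> ` P)"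
    unfolding img
    by (rule fusion_system_restrict[OF grp H_fs \<theta>(1) sub F_image_subgrps[OF fusion_system_comp[OF F_fs \<rho> \<phi>]]])
  moreover have "bij_betw (restrict \<theta> (?\<phi>\<rho> ` P)) (?\<phi>\<rho> ` P) (?\<psi>\<rho> ` P)"
    using inj_on_subset[OF bij_betw_imp_inj_on[OF \<theta>(2)] sub] unfolding img
    by (simp add: bij_betw_def inj_on_def)
  moreover have "?\<psi>\<rho> = comp_on P (restrict \<theta> (?\<phi>\<rho> ` P)) ?\<phi>\<rho>"
    by (rule extensionalityI[of _ P]) (use \<theta>(3) \<rho>P in \<open>auto simp: comp_on_def\<close>)
  moreover have "?\<psi>\<rho> \<in> F P TH" by (rule fusion_system_comp[OF F_fs \<rho> rep_clsD[OF \<psi>]])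
  ultimately show ?thesis unfolding mem_rep_cls by blast
qed

lemma rep_pre_rep_cls:
  assumes \<phi>: "\<phi> \<in> F Q TH" and \<rho>: "\<rho> \<in> F P Q"
  shows "rep_pre F H TH P \<rho> (cls Q \<phi>) = cls P (comp_on P \<phi> \<rho>)"
  unfolding rep_pre_def
  by (rule rep_cls_eq[OF fusion_system_comp[OF F_fs \<rho> \<phi>] rep_cls_comp_right[OF rep_cls_SOME[OF \<phi>] \<phi> \<rho>]])

lemma rep_pre_Pi:
  assumes \<rho>: "\<rho> \<in> F P Q"
  shows "rep_pre F H TH P \<rho> \<in> Rep F H TH Q \<rightarrow> Rep F H TH P"
proof
  fix c assume "c \<in> Rep F H TH Q"
  then obtain \<phi> where \<phi>: "\<phi> \<in> F Q TH" "c = cls Q \<phi>" by (rule Rep_cases)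
  show "rep_pre F H TH P \<rho> c \<in> Rep F H TH P"
    unfolding \<phi>(2) rep_pre_rep_cls[OF \<phi>(1) \<rho>] by (rule rep_cls_in_Rep[OF fusion_system_comp[OF F_fs \<rho> \<phi>(1)]])
qed

lemma rep_cls_H_eq_incl:
  assumes \<phi>: "\<phi> \<in> H P TH"
  shows "cls P \<phi> = cls P (restrict id P)"
proof -
  have P: "P \<in> subgrps G TH" using fusion_system_subgrps(1)[OF H_fs \<phi>] .
  have "\<phi> \<in> cls P (restrict id P)" unfolding mem_rep_cls
  proof (intro conjI bexI)
    show "\<phi> \<in> F P TH" using H_in_F[OF \<phi>] .
    show "\<phi> \<in> H (restrict id P ` P) (\<phi> ` P)" using fusion_system_image(1)[OF H_fs \<phi>] by simp
    show "bij_betw \<phi> (restrict id P ` P) (\<phi> ` P)"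
      using InjHomD(3)[OF fusion_system_InjHom[OF H_fs \<phi>]] by (simp add: bij_betw_def)
    show "\<phi> = comp_on P \<phi> (restrict id P)"
      using comp_on_id[OF InjHomD(1)[OF fusion_system_InjHom[OF H_fs \<phi>]]] by simp
  qed
  then show ?thesis using rep_cls_eq[OF H_in_F[OF incl_in_H[OF P]]] by simp
qed

lemma finite_Rep:
  assumes fin: "finite (carrier G)"
  shows "finite (Rep F H TH P)"
proof -
  have "F P TH \<subseteq> PiE P (\<lambda>_. TH)"
  proof
    fix \<psi> assume "\<psi> \<in> F P TH"
    from InjHomD(1,2)[OF fusion_system_InjHom[OF F_fs this]] show "\<psi> \<in> PiE P (\<lambda>_. TH)"
      by (auto simp: PiE_def)
  qed
  moreover have "finite (PiE P (\<lambda>_. TH))" if "F P TH \<noteq> {}"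
  proof -
    have "P \<subseteq> carrier G" using that subgrpsD(1)[OF fusion_system_subgrps(1)[OF F_fs]] by blast
    then show ?thesis
      using finite_PiE finite_subset[OF subgrpsD(1)[OF TH_subgrps(1)] fin] fin
      by (metis finite_subset)
  qed
  ultimately have "finite (F P TH)" using finite_subset by fastforce
  then show ?thesis unfolding Rep_def by simp
qed

end

lemma rep_cls_mono:
  assumes "subsystem H H'" "F P TH \<subseteq> F P TH'" "\<psi> \<in> rep_cls F H TH P \<phi>"
  shows "\<psi> \<in> rep_cls F H' TH' P \<phi>"
  using assms unfolding rep_cls_def subsystem_def by blast

lemma carrier_nat_mod: "carrier (nat_mod G F C R B Bm M Mmap) = nat_trans G F C R B Bm M Mmap"
  and nat_mod_add: "\<eta> \<oplus>\<^bsub>nat_mod G F C R B Bm M Mmap\<^esub> \<mu>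
     = (\<lambda>P\<in>C. \<lambda>a\<in>carrier (free_mod R (B P)). \<eta> P a \<oplus>\<^bsub>M P\<^esub> \<mu> P a)"
  and nat_mod_smult: "r \<odot>\<^bsub>nat_mod G F C R B Bm M Mmap\<^esub> \<eta>
     = (\<lambda>P\<in>C. \<lambda>a\<in>carrier (free_mod R (B P)). r \<odot>\<^bsub>M P\<^esub> \<eta> P a)"
  and nat_mod_zero: "\<zero>\<^bsub>nat_mod G F C R B Bm M Mmap\<^esub> = (\<lambda>P\<in>C. \<lambda>a\<in>carrier (free_mod R (B P)). \<zero>\<^bsub>M P\<^esub>)"
  by (simp_all add: nat_mod_def)

locale fusion_amalgam =
  fixes G :: "'a monoid" and S' :: "'a set" and R :: "'r ring"
    and F1 F2 Fe F :: "'a set \<Rightarrow> 'a set \<Rightarrow> ('a \<Rightarrow> 'a) set"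
    and C :: "'a set set"
    and M :: "'a set \<Rightarrow> ('r, 'm) module"
    and Mmap :: "'a set \<Rightarrow> 'a set \<Rightarrow> ('a \<Rightarrow> 'a) set \<Rightarrow> 'm \<Rightarrow> 'm"
  assumes R: "cring R" and grp: "group G" and fin: "finite (carrier G)"
    and S'_subgroup: "subgroup S' G"
    and F1_fs: "fusion_system G (carrier G) F1" and F2_fs: "fusion_system G S' F2"
    and Fe_fs: "fusion_system G S' Fe"
    and Fe_F1: "subsystem Fe F1" and Fe_F2: "subsystem Fe F2"
    and F_def: "F = generated_fs G F1 F2"
    and C_subgrps: "C \<subseteq> subgrps G (carrier G)" and S'_in_C: "S' \<in> C"
    and C_conj: "\<forall>P\<in>C. \<forall>\<phi>\<in>F P (carrier G). \<phi> ` P \<in> C"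
    and C_over: "\<forall>P\<in>C. \<forall>Q. subgroup Q G \<and> P \<subseteq> Q \<longrightarrow> Q \<in> C"
    and M_functor: "orbit_functor G F C R M Mmap"
begin

abbreviation "S \<equiv> carrier G"
abbreviation "Mmor P Q \<phi> \<equiv> Mmap P Q (orb_cls G P Q \<phi>)"
abbreviation "incl P \<equiv> restrict id P"

lemma R_ring: "ring R" using R cring.axioms(1) by blast

lemma F_fs: "fusion_system G S F"
  unfolding F_def by (rule fusion_system_generated_fs[OF grp F1_fs F2_fs])

lemma F1_in_F: "\<phi> \<in> F1 P Q \<Longrightarrow> \<phi> \<in> F P Q"
  and F2_in_F: "\<phi> \<in> F2 P Q \<Longrightarrow> \<phi> \<in> F P Q"
  using subsystem_generated_fs unfolding F_def subsystem_def by blast+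

lemma rep_classes_F1: "rep_classes G F F1 S"
  and rep_classes_F2: "rep_classes G F F2 S'"
  and rep_classes_Fe: "rep_classes G F Fe S'"
proof -
  have "subsystem F1 F" "subsystem F2 F" "subsystem Fe F"
    using F1_in_F F2_in_F Fe_F1 unfolding subsystem_def by blast+
  then show "rep_classes G F F1 S" "rep_classes G F F2 S'" "rep_classes G F Fe S'"
    using grp F_fs F1_fs F2_fs Fe_fs by (simp_all add: rep_classes_def)
qed

lemma S_subgrps: "S \<in> subgrps G S"
  using group.subgroup_self[OF grp] unfolding subgrps_def by simp

lemma S_in_C: "S \<in> C"
  using C_over S'_in_C group.subgroup_self[OF grp] subgroup.subset[OF S'_subgroup] by blast

lemma C_subgrpsD: "P \<in> C \<Longrightarrow> P \<in> subgrps G S"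
  using C_subgrps by blast

lemma F_codomain_S: "\<phi> \<in> F P Q \<Longrightarrow> \<phi> \<in> F P S"
  using fusion_system_codomain_mono[OF grp F_fs _ subgrpsD(1) S_subgrps] fusion_system_subgrps(2)[OF F_fs]
  by blast

lemma incl_in_F: "P \<in> C \<Longrightarrow> incl P \<in> F P S"
  using fusion_system_incl[OF grp F_fs subgrpsD(1)[OF C_subgrpsD] C_subgrpsD S_subgrps] by blast

lemma C_closed:
  assumes "\<phi> \<in> F P Q" "P \<in> C"
  shows "\<phi> ` P \<in> C" "Q \<in> C"
proof -
  show img: "\<phi> ` P \<in> C" using C_conj F_codomain_S[OF assms(1)] assms(2) by blast
  have "\<phi> ` P \<subseteq> Q" using InjHomD(2)[OF fusion_system_InjHom[OF F_fs assms(1)]] .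
  then show "Q \<in> C" using C_over img subgrpsD(2)[OF fusion_system_subgrps(2)[OF F_fs assms(1)]] by blast
qed

lemma M_module: "P \<in> C \<Longrightarrow> module R (M P)"
  using M_functor unfolding orbit_functor_def by blast

lemma Mmor_linear: "P \<in> C \<Longrightarrow> Q \<in> C \<Longrightarrow> \<phi> \<in> F P Q \<Longrightarrow> linear_map R (M Q) (M P) (Mmor P Q \<phi>)"
  using M_functor unfolding orbit_functor_def orb_hom_def by blast

lemma Mmor_carrier:
  "P \<in> C \<Longrightarrow> Q \<in> C \<Longrightarrow> \<phi> \<in> F P Q \<Longrightarrow> x \<in> carrier (M Q) \<Longrightarrow> Mmor P Q \<phi> x \<in> carrier (M P)"
  using linear_mapD(1)[OF Mmor_linear] by blast

lemma Mmor_incl: "P \<in> C \<Longrightarrow> x \<in> carrier (M P) \<Longrightarrow> Mmor P P (incl P) x = x"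
  using M_functor unfolding orbit_functor_def by blast

lemma Mmor_comp:
  "P \<in> C \<Longrightarrow> Q \<in> C \<Longrightarrow> T \<in> C \<Longrightarrow> \<phi> \<in> F P Q \<Longrightarrow> \<psi> \<in> F Q T \<Longrightarrow> x \<in> carrier (M T)
   \<Longrightarrow> Mmor P T (comp_on P \<psi> \<phi>) x = Mmor P Q \<phi> (Mmor Q T \<psi> x)"
  using M_functor unfolding orbit_functor_def by blast

section \<open>Families compatible with a generating pair\<close>

context
  fixes y :: "'a set \<Rightarrow> 'm"
  assumes y_carrier: "\<And>P. P \<in> C \<Longrightarrow> y P \<in> carrier (M P)"
    and y_F1: "\<And>P Q \<phi>. P \<in> C \<Longrightarrow> Q \<in> C \<Longrightarrow> \<phi> \<in> F1 P Q \<Longrightarrow> Mmor P Q \<phi> (y Q) = y P"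
    and y_F2: "\<And>P Q \<phi>. P \<in> C \<Longrightarrow> Q \<in> C \<Longrightarrow> \<phi> \<in> F2 P Q \<Longrightarrow> Mmor P Q \<phi> (y Q) = y P"
begin

definition compat_morphs :: "'a set \<Rightarrow> 'a set \<Rightarrow> ('a \<Rightarrow> 'a) set" where
  "compat_morphs P Q = {\<phi> \<in> F P Q. P \<in> C \<longrightarrow> Q \<in> C \<longrightarrow> Mmor P Q \<phi> (y Q) = y P}"

lemma compat_morphs_F: "\<phi> \<in> compat_morphs P Q \<Longrightarrow> \<phi> \<in> F P Q"
  unfolding compat_morphs_def by simp

text \<open>Restriction to the image uses compatibility with the \<open>F1\<close>-inclusion \<open>\<phi> P \<le> Q\<close>.\<close>

lemma compat_morphs_onto_image:
  assumes \<phi>: "\<phi> \<in> compat_morphs P Q"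
  shows "\<phi> \<in> compat_morphs P (\<phi> ` P)"
proof -
  have \<phi>F: "\<phi> \<in> F P Q" using compat_morphs_F[OF \<phi>] .
  have onto: "\<phi> \<in> F P (\<phi> ` P)" using fusion_system_image(1)[OF F_fs \<phi>F] .
  have "Mmor P (\<phi> ` P) \<phi> (y (\<phi> ` P)) = y P" if P: "P \<in> C"
  proof -
    have U: "\<phi> ` P \<in> C" and Q: "Q \<in> C" using C_closed[OF \<phi>F P] by auto
    have sub: "\<phi> ` P \<subseteq> Q" using InjHomD(2)[OF fusion_system_InjHom[OF F_fs \<phi>F]] .
    have inc: "incl (\<phi> ` P) \<in> F1 (\<phi> ` P) Q"
      using fusion_system_incl[OF grp F1_fs sub C_subgrpsD[OF U] C_subgrpsD[OF Q]] .
    have "Mmor P (\<phi> ` P) \<phi> (y (\<phi> ` P)) = Mmor P (\<phi> ` P) \<phi> (Mmor (\<phi> ` P) Q (incl (\<phi> ` P)) (y Q))"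
      using y_F1[OF U Q inc] by simp
    also have "\<dots> = Mmor P Q (comp_on P (incl (\<phi> ` P)) \<phi>) (y Q)"
      using Mmor_comp[OF P U Q onto F1_in_F[OF inc] y_carrier[OF Q]] by simp
    also have "comp_on P (incl (\<phi> ` P)) \<phi> = \<phi>"
      using comp_on_incl InjHomD(1)[OF fusion_system_InjHom[OF F_fs \<phi>F]] by blast
    finally show ?thesis using \<phi> P Q unfolding compat_morphs_def by simp
  qed
  then show ?thesis unfolding compat_morphs_def using onto by simp
qed

lemma compat_morphs_inv:
  assumes \<phi>: "\<phi> \<in> compat_morphs P Q"
  shows "restrict (inv_into P \<phi>) (\<phi> ` P) \<in> compat_morphs (\<phi> ` P) P"
proof -
  let ?\<phi>' = "restrict (inv_into P \<phi>) (\<phi> ` P)"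
  have \<phi>F: "\<phi> \<in> F P Q" using compat_morphs_F[OF \<phi>] .
  have \<phi>'F: "?\<phi>' \<in> F (\<phi> ` P) P" using fusion_system_image(3)[OF F_fs \<phi>F] .
  have "Mmor (\<phi> ` P) P ?\<phi>' (y P) = y (\<phi> ` P)" if U: "\<phi> ` P \<in> C" and P: "P \<in> C"
  proof -
    have "y P = Mmor P (\<phi> ` P) \<phi> (y (\<phi> ` P))"
      using compat_morphs_onto_image[OF \<phi>] P U unfolding compat_morphs_def by simp
    then have "Mmor (\<phi> ` P) P ?\<phi>' (y P) = Mmor (\<phi> ` P) (\<phi> ` P) (comp_on (\<phi> ` P) \<phi> ?\<phi>') (y (\<phi> ` P))"
      using Mmor_comp[OF U P U \<phi>'F fusion_system_image(1)[OF F_fs \<phi>F] y_carrier[OF U]] by simp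
    also have "comp_on (\<phi> ` P) \<phi> ?\<phi>' = incl (\<phi> ` P)"
      unfolding comp_on_def by (intro restrict_ext) (simp add: f_inv_into_f)
    finally show ?thesis using Mmor_incl[OF U y_carrier[OF U]] by (simp only:)
  qed
  then show ?thesis unfolding compat_morphs_def using \<phi>'F by simp
qed

lemma fusion_system_compat_morphs: "fusion_system G S compat_morphs"
  unfolding fusion_system_def
proof (intro conjI allI impI)
  show "subgroup S G" by (rule group.subgroup_self[OF grp])
next
  fix P Q assume "P \<in> subgrps G S \<and> Q \<in> subgrps G S"
  then have "HomT G S P Q \<subseteq> F1 P Q" using F1_fs unfolding fusion_system_def by blast
  then show "HomT G S P Q \<subseteq> compat_morphs P Q"
    unfolding compat_morphs_def using y_F1 F1_in_F by blast
  show "compat_morphs P Q \<subseteq> InjHom G P Q"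
    using compat_morphs_F fusion_system_InjHom[OF F_fs] by blast
next
  fix P Q :: "'a set" assume "\<not> (P \<in> subgrps G S \<and> Q \<in> subgrps G S)"
  then show "compat_morphs P Q = {}" using compat_morphs_F fusion_system_subgrps[OF F_fs] by blast
next
  fix P Q T \<phi> \<psi> assume \<phi>: "\<phi> \<in> compat_morphs P Q" and \<psi>: "\<psi> \<in> compat_morphs Q T"
  have \<phi>F: "\<phi> \<in> F P Q" and \<psi>F: "\<psi> \<in> F Q T" using compat_morphs_F \<phi> \<psi> by auto
  have "Mmor P T (comp_on P \<psi> \<phi>) (y T) = y P" if P: "P \<in> C" and T: "T \<in> C"
  proof -
    have Q: "Q \<in> C" using C_closed[OF \<phi>F P] by simp
    show ?thesis
      using Mmor_comp[OF P Q T \<phi>F \<psi>F y_carrier[OF T]] \<phi> \<psi> P Q T unfolding compat_morphs_def by simp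
  qed
  then show "comp_on P \<psi> \<phi> \<in> compat_morphs P T"
    unfolding compat_morphs_def using fusion_system_comp[OF F_fs \<phi>F \<psi>F] by simp
next
  fix P Q \<phi> assume "\<phi> \<in> compat_morphs P Q"
  then show "\<phi> \<in> compat_morphs P (\<phi> ` P)" "restrict (inv_into P \<phi>) (\<phi> ` P) \<in> compat_morphs (\<phi> ` P) P"
    by (rule compat_morphs_onto_image, rule compat_morphs_inv)
qed

lemma compatible_generated:
  assumes "\<phi> \<in> F P Q" "P \<in> C" "Q \<in> C"
  shows "Mmor P Q \<phi> (y Q) = y P"
proof -
  have "subsystem F1 compat_morphs" "subsystem F2 compat_morphs"
    unfolding subsystem_def compat_morphs_def using y_F1 y_F2 F1_in_F F2_in_F by blast+
  then have "\<phi> \<in> compat_morphs P Q"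
    using assms(1) fusion_system_compat_morphs unfolding F_def mem_generated_fs by blast
  then show ?thesis using assms(2,3) unfolding compat_morphs_def by simp
qed

end

section \<open>Natural transformations out of \<open>R Rep_F(-, H)\<close>\<close>

context
  fixes H TH u
  assumes H: "rep_classes G F H TH" and TH_in_C: "TH \<in> C"
    and u_carrier: "\<And>P c. P \<in> C \<Longrightarrow> c \<in> Rep F H TH P \<Longrightarrow> u P c \<in> carrier (M P)"
    and u_natural: "\<And>P Q \<rho> c. P \<in> C \<Longrightarrow> Q \<in> C \<Longrightarrow> \<rho> \<in> F P Q \<Longrightarrow> c \<in> Rep F H TH Q
                  \<Longrightarrow> u P (rep_pre F H TH P \<rho> c) = Mmor P Q \<rho> (u Q c)"
begin

interpretation H: rep_classes G F H TH by (rule H)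

lemma Rep_nat_rep_cls:
  assumes P: "P \<in> C" and \<phi>: "\<phi> \<in> F P TH"
  shows "u P (rep_cls F H TH P \<phi>) = Mmor P TH \<phi> (u TH (rep_cls F H TH TH (incl TH)))"
proof -
  have "rep_pre F H TH P \<phi> (rep_cls F H TH TH (incl TH)) = rep_cls F H TH P \<phi>"
    using H.rep_pre_rep_cls[OF H.incl_TH_in_F \<phi>] H.comp_on_incl_TH[OF \<phi>] by simp
  then show ?thesis using u_natural[OF P TH_in_C \<phi> H.rep_cls_in_Rep[OF H.incl_TH_in_F]] by simp
qed

lemma Rep_nat_incl_compatible:
  assumes P: "P \<in> C" and Q: "Q \<in> C" and \<phi>: "\<phi> \<in> H P Q"
  shows "Mmor P Q \<phi> (u Q (rep_cls F H TH Q (incl Q))) = u P (rep_cls F H TH P (incl P))"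
proof -
  have Q_subgrps: "Q \<in> subgrps G TH" using fusion_system_subgrps(2)[OF H.H_fs \<phi>] .
  have inclQ: "incl Q \<in> F Q TH" using H.H_in_F[OF H.incl_in_H[OF Q_subgrps]] .
  have "rep_pre F H TH P \<phi> (rep_cls F H TH Q (incl Q)) = rep_cls F H TH P (comp_on P (incl Q) \<phi>)"
    by (rule H.rep_pre_rep_cls[OF inclQ H.H_in_F[OF \<phi>]])
  also have "comp_on P (incl Q) \<phi> = \<phi>"
    using comp_on_incl InjHomD(1,2)[OF fusion_system_InjHom[OF H.H_fs \<phi>]] by blast
  also have "rep_cls F H TH P \<phi> = rep_cls F H TH P (incl P)"
    using H.rep_cls_H_eq_incl fusion_system_codomain_mono[OF grp H.H_fs \<phi> subgrpsD(1)[OF Q_subgrps]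
        H.TH_subgrps(2)] by blast
  finally have "rep_pre F H TH P \<phi> (rep_cls F H TH Q (incl Q)) = rep_cls F H TH P (incl P)" .
  with u_natural[OF P Q H.H_in_F[OF \<phi>] H.rep_cls_in_Rep[OF inclQ]] show ?thesis by simp
qed

lemma Rep_nat_incl_fixed: "u TH (rep_cls F H TH TH (incl TH)) \<in> fixed_pts G C M Mmap H TH"
  unfolding fixed_pts_def
proof (rule CollectI, rule exI[of _ "\<lambda>P. u P (rep_cls F H TH P (incl P))"], intro conjI ballI impI refl)
  fix P assume "P \<in> C" "P \<subseteq> TH"
  then have "incl P \<in> F P TH"
    using H.H_in_F[OF H.incl_in_H] C_subgrpsD unfolding subgrps_def by blast
  then show "u P (rep_cls F H TH P (incl P)) \<in> carrier (M P)" using u_carrier[OF \<open>P \<in> C\<close> H.rep_cls_in_Rep] by blast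
next
  fix P Q \<rho> assume P: "P \<in> C" and Q: "Q \<in> C" and "\<rho> \<in> orb_hom G H P Q"
  then obtain \<phi> where "\<phi> \<in> H P Q" "\<rho> = orb_cls G P Q \<phi>" unfolding orb_hom_def by blast
  then show "Mmap P Q \<rho> (u Q (rep_cls F H TH Q (incl Q))) = u P (rep_cls F H TH P (incl P))"
    using Rep_nat_incl_compatible[OF P Q] by simp
qed

end

context
  fixes H TH x
  assumes H: "rep_classes G F H TH" and TH_in_C: "TH \<in> C"
    and x_fixed: "x \<in> fixed_pts G C M Mmap H TH"
begin

interpretation H: rep_classes G F H TH by (rule H)

lemma fixed_ptsE:
  obtains y where "x = y TH" "\<And>P. P \<in> C \<Longrightarrow> P \<subseteq> TH \<Longrightarrow> y P \<in> carrier (M P)"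
    "\<And>P Q \<phi>. P \<in> C \<Longrightarrow> Q \<in> C \<Longrightarrow> \<phi> \<in> H P Q \<Longrightarrow> Mmor P Q \<phi> (y Q) = y P"
proof -
  obtain y where y: "x = y TH" "\<forall>P\<in>C. P \<subseteq> TH \<longrightarrow> y P \<in> carrier (M P)"
    "\<forall>P\<in>C. \<forall>Q\<in>C. P \<subseteq> TH \<longrightarrow> Q \<subseteq> TH \<longrightarrow> (\<forall>\<rho>\<in>orb_hom G H P Q. Mmap P Q \<rho> (y Q) = y P)"
    using x_fixed unfolding fixed_pts_def by blast
  have "Mmor P Q \<phi> (y Q) = y P" if "P \<in> C" "Q \<in> C" "\<phi> \<in> H P Q" for P Q \<phi>
  proof -
    have "P \<subseteq> TH" "Q \<subseteq> TH" using fusion_system_subgrps[OF H.H_fs that(3)] subgrpsD(1) by blast+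
    moreover have "orb_cls G P Q \<phi> \<in> orb_hom G H P Q" unfolding orb_hom_def using that(3) by simp
    ultimately show ?thesis using y(3) that by blast
  qed
  then show ?thesis using that y(1,2) by blast
qed

lemma fixed_pts_carrier: "x \<in> carrier (M TH)"
  using x_fixed TH_in_C unfolding fixed_pts_def by blast

lemma Mmor_rep_cls_eq:
  assumes P: "P \<in> C" and \<phi>: "\<phi> \<in> F P TH" and \<psi>: "\<psi> \<in> rep_cls F H TH P \<phi>"
  shows "Mmor P TH \<psi> x = Mmor P TH \<phi> x"
proof -
  obtain \<theta> where \<theta>: "\<theta> \<in> H (\<phi> ` P) (\<psi> ` P)" "\<psi> = comp_on P \<theta> \<phi>"
    using \<psi> unfolding H.mem_rep_cls by blast
  let ?U = "\<phi> ` P"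
  have U_subgrps: "?U \<in> subgrps G TH" using H.F_image_subgrps[OF \<phi>] .
  have U: "?U \<in> C" using C_closed(1)[OF \<phi> P] .
  have \<theta>TH: "\<theta> \<in> H ?U TH"
    using fusion_system_codomain_mono[OF grp H.H_fs \<theta>(1) _ H.TH_subgrps(2)]
      InjHomD(2)[OF fusion_system_InjHom[OF F_fs H.rep_clsD[OF \<psi>]]] by blast
  have \<phi>U: "\<phi> \<in> F P ?U" using fusion_system_image(1)[OF F_fs \<phi>] .
  obtain y where y: "x = y TH" "\<And>P. P \<in> C \<Longrightarrow> P \<subseteq> TH \<Longrightarrow> y P \<in> carrier (M P)"
    "\<And>P Q \<phi>. P \<in> C \<Longrightarrow> Q \<in> C \<Longrightarrow> \<phi> \<in> H P Q \<Longrightarrow> Mmor P Q \<phi> (y Q) = y P"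
    using fixed_ptsE by blast
  have "Mmor P TH \<psi> x = Mmor P ?U \<phi> (Mmor ?U TH \<theta> x)"
    unfolding \<theta>(2) by (rule Mmor_comp[OF P U TH_in_C \<phi>U H.H_in_F[OF \<theta>TH] fixed_pts_carrier])
  also have "Mmor ?U TH \<theta> x = Mmor ?U TH (incl ?U) x"
    using y(1,3) \<theta>TH H.incl_in_H[OF U_subgrps] U TH_in_C by simp
  also have "Mmor P ?U \<phi> \<dots> = Mmor P TH (comp_on P (incl ?U) \<phi>) x"
    by (rule Mmor_comp[OF P U TH_in_C \<phi>U H.H_in_F[OF H.incl_in_H[OF U_subgrps]] fixed_pts_carrier, symmetric])
  also have "comp_on P (incl ?U) \<phi> = \<phi>"
    using comp_on_incl InjHomD(1)[OF fusion_system_InjHom[OF F_fs \<phi>]] by blast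
  finally show ?thesis .
qed

definition rep_ext :: "'a set \<Rightarrow> ('a \<Rightarrow> 'a) set \<Rightarrow> 'm" where
  "rep_ext P c = Mmor P TH (SOME \<phi>. \<phi> \<in> c) x"

lemma rep_ext_rep_cls:
  assumes P: "P \<in> C" and \<phi>: "\<phi> \<in> F P TH"
  shows "rep_ext P (rep_cls F H TH P \<phi>) = Mmor P TH \<phi> x"
  unfolding rep_ext_def using Mmor_rep_cls_eq[OF P \<phi> H.rep_cls_SOME[OF \<phi>]] .

lemma rep_ext_carrier:
  assumes P: "P \<in> C" and c: "c \<in> Rep F H TH P"
  shows "rep_ext P c \<in> carrier (M P)"
  unfolding rep_ext_def using Mmor_carrier[OF P TH_in_C H.Rep_SOME(1)[OF c] fixed_pts_carrier] .

lemma rep_ext_natural: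
  assumes P: "P \<in> C" and Q: "Q \<in> C" and \<rho>: "\<rho> \<in> F P Q" and c: "c \<in> Rep F H TH Q"
  shows "rep_ext P (rep_pre F H TH P \<rho> c) = Mmor P Q \<rho> (rep_ext Q c)"
proof -
  obtain \<phi> where \<phi>: "\<phi> \<in> F Q TH" "c = rep_cls F H TH Q \<phi>" using H.Rep_cases[OF c] .
  have "rep_ext P (rep_pre F H TH P \<rho> c) = Mmor P TH (comp_on P \<phi> \<rho>) x"
    unfolding \<phi>(2) H.rep_pre_rep_cls[OF \<phi>(1) \<rho>] by (rule rep_ext_rep_cls[OF P fusion_system_comp[OF F_fs \<rho> \<phi>(1)]])
  also have "\<dots> = Mmor P Q \<rho> (Mmor Q TH \<phi> x)" by (rule Mmor_comp[OF P Q TH_in_C \<rho> \<phi>(1) fixed_pts_carrier])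
  also have "Mmor Q TH \<phi> x = rep_ext Q c" unfolding \<phi>(2) by (rule rep_ext_rep_cls[OF Q \<phi>(1), symmetric])
  finally show ?thesis .
qed

lemma rep_ext_incl: "rep_ext TH (rep_cls F H TH TH (incl TH)) = x"
  using rep_ext_rep_cls[OF TH_in_C H.incl_TH_in_F] Mmor_incl[OF TH_in_C fixed_pts_carrier] by simp

end

lemma fixed_pts_neg:
  assumes H: "rep_classes G F H TH" and x: "x \<in> fixed_pts G C M Mmap H TH"
  shows "\<ominus>\<^bsub>M TH\<^esub> x \<in> fixed_pts G C M Mmap H TH"
proof -
  interpret H: rep_classes G F H TH by (rule H)
  obtain y where y: "x = y TH" "\<forall>P\<in>C. P \<subseteq> TH \<longrightarrow> y P \<in> carrier (M P)"
    "\<forall>P\<in>C. \<forall>Q\<in>C. P \<subseteq> TH \<longrightarrow> Q \<subseteq> TH \<longrightarrow> (\<forall>\<rho>\<in>orb_hom G H P Q. Mmap P Q \<rho> (y Q) = y P)"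
    using x unfolding fixed_pts_def by blast
  have "Mmap P Q \<rho> (\<ominus>\<^bsub>M Q\<^esub> y Q) = \<ominus>\<^bsub>M P\<^esub> y P"
    if P: "P \<in> C" and Q: "Q \<in> C" and "P \<subseteq> TH" "Q \<subseteq> TH" and \<rho>: "\<rho> \<in> orb_hom G H P Q" for P Q \<rho>
  proof -
    obtain \<phi> where \<phi>: "\<phi> \<in> H P Q" "\<rho> = orb_cls G P Q \<phi>" using \<rho> unfolding orb_hom_def by blast
    have "Mmap P Q \<rho> (\<ominus>\<^bsub>M Q\<^esub> y Q) = \<ominus>\<^bsub>M P\<^esub> Mmap P Q \<rho> (y Q)"
      unfolding \<phi>(2)
      by (rule linear_map_minus[OF M_module[OF Q] M_module[OF P] Mmor_linear[OF P Q H.H_in_F[OF \<phi>(1)]]])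
        (use y(2) that in blast)
    then show ?thesis using y(3) that by simp
  qed
  moreover have "\<forall>P\<in>C. P \<subseteq> TH \<longrightarrow> \<ominus>\<^bsub>M P\<^esub> y P \<in> carrier (M P)"
    using y(2) M_module module.axioms(2) abelian_group.a_inv_closed by metis
  ultimately show ?thesis unfolding fixed_pts_def using y(1)
    by (intro CollectI exI[of _ "\<lambda>P. \<ominus>\<^bsub>M P\<^esub> y P"]) simp
qed

context
  fixes B :: "'a set \<Rightarrow> 'x set" and g :: "'a set \<Rightarrow> 'a set \<Rightarrow> ('a \<Rightarrow> 'a) \<Rightarrow> 'x \<Rightarrow> 'x"
  assumes B_finite: "\<And>P. finite (B P)"
    and g_Pi: "\<forall>P Q. \<forall>\<rho>\<in>F P Q. g P Q \<rho> \<in> B Q \<rightarrow> B P"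
begin

abbreviation "NT \<equiv> nat_trans G F C R B (\<lambda>P Q \<rho>. free_map R (B Q) (g P Q \<rho>)) M Mmap"

lemma nat_trans_linear: "\<eta> \<in> NT \<Longrightarrow> P \<in> C \<Longrightarrow> linear_map R (free_mod R (B P)) (M P) (\<eta> P)"
  unfolding nat_trans_def by blast

lemma nat_trans_natural:
  "\<eta> \<in> NT \<Longrightarrow> P \<in> C \<Longrightarrow> Q \<in> C \<Longrightarrow> \<rho> \<in> F P Q \<Longrightarrow> a \<in> carrier (free_mod R (B Q))
   \<Longrightarrow> \<eta> P (free_map R (B Q) (g P Q \<rho>) a) = Mmor P Q \<rho> (\<eta> Q a)"
  unfolding nat_trans_def by blast

lemma nat_trans_basis_carrier: "\<eta> \<in> NT \<Longrightarrow> P \<in> C \<Longrightarrow> c \<in> B P \<Longrightarrow> \<eta> P (basis_vec R c) \<in> carrier (M P)"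
  by (rule linear_mapD(1)[OF nat_trans_linear basis_vec_in_free_mod[OF R_ring]])

lemma nat_trans_basis_natural:
  assumes "\<eta> \<in> NT" "P \<in> C" "Q \<in> C" "\<rho> \<in> F P Q" "c \<in> B Q"
  shows "\<eta> P (basis_vec R (g P Q \<rho> c)) = Mmor P Q \<rho> (\<eta> Q (basis_vec R c))"
  using nat_trans_natural[OF assms(1-4) basis_vec_in_free_mod[OF R_ring assms(5)]]
  unfolding free_map_basis_vec[OF R_ring B_finite assms(5)] .

lemma nat_trans_eqI:
  assumes \<eta>: "\<eta> \<in> NT" and \<mu>: "\<mu> \<in> NT"
    and eq: "\<And>P c. P \<in> C \<Longrightarrow> c \<in> B P \<Longrightarrow> \<eta> P (basis_vec R c) = \<mu> P (basis_vec R c)"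
  shows "\<eta> = \<mu>"
proof (rule extensionalityI[of _ C])
  show "\<eta> \<in> extensional C" "\<mu> \<in> extensional C" using \<eta> \<mu> unfolding nat_trans_def by blast+
  fix P assume P: "P \<in> C"
  show "\<eta> P = \<mu> P"
  proof (rule extensionalityI[of _ "carrier (free_mod R (B P))"])
    show "\<eta> P \<in> extensional (carrier (free_mod R (B P)))" "\<mu> P \<in> extensional (carrier (free_mod R (B P)))"
      using \<eta> \<mu> P unfolding nat_trans_def by blast+
  qed (rule linear_map_free_mod_eqI[OF R M_module[OF P] nat_trans_linear[OF \<eta> P] nat_trans_linear[OF \<mu> P]
        B_finite eq[OF P]])
qed

definition nat_of_basis :: "('a set \<Rightarrow> 'x \<Rightarrow> 'm) \<Rightarrow> 'a set \<Rightarrow> ('x \<Rightarrow> 'r) \<Rightarrow> 'm" where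
  "nat_of_basis v = (\<lambda>P\<in>C. \<lambda>a\<in>carrier (free_mod R (B P)). \<Oplus>\<^bsub>M P\<^esub>c\<in>B P. a c \<odot>\<^bsub>M P\<^esub> v P c)"

context
  fixes v :: "'a set \<Rightarrow> 'x \<Rightarrow> 'm"
  assumes v_carrier: "\<And>P. P \<in> C \<Longrightarrow> v P \<in> B P \<rightarrow> carrier (M P)"
    and v_natural: "\<And>P Q \<rho> c. P \<in> C \<Longrightarrow> Q \<in> C \<Longrightarrow> \<rho> \<in> F P Q \<Longrightarrow> c \<in> B Q
       \<Longrightarrow> v P (g P Q \<rho> c) = Mmor P Q \<rho> (v Q c)"
begin

lemma linear_map_nat_of_basis:
  assumes P: "P \<in> C"
  shows "linear_map R (free_mod R (B P)) (M P) (nat_of_basis v P)"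
  by (rule linear_map_free_mod_cong[OF R_ring linear_map_free_sum[OF M_module[OF P] B_finite v_carrier[OF P]]])
    (simp add: nat_of_basis_def P)

lemma nat_of_basis_basis_vec:
  assumes P: "P \<in> C" and c: "c \<in> B P"
  shows "nat_of_basis v P (basis_vec R c) = v P c"
  using free_sum_basis_vec[OF M_module[OF P] B_finite v_carrier[OF P] c]
    basis_vec_in_free_mod[OF R_ring c] P
  by (simp add: nat_of_basis_def)

lemma nat_of_basis_in_nat_trans: "nat_of_basis v \<in> NT"
  unfolding nat_trans_def
proof (intro CollectI conjI ballI)
  show "nat_of_basis v \<in> extensional C" unfolding nat_of_basis_def by simp
next
  fix P assume P: "P \<in> C"
  show "nat_of_basis v P \<in> extensional (carrier (free_mod R (B P)))" unfolding nat_of_basis_def using P by simp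
  show "linear_map R (free_mod R (B P)) (M P) (nat_of_basis v P)" by (rule linear_map_nat_of_basis[OF P])
next
  fix P Q \<rho> a assume P: "P \<in> C" and Q: "Q \<in> C" and \<rho>: "\<rho> \<in> F P Q" and a: "a \<in> carrier (free_mod R (B Q))"
  show "nat_of_basis v P (free_map R (B Q) (g P Q \<rho>) a) = Mmor P Q \<rho> (nat_of_basis v Q a)"
  proof (rule linear_map_free_mod_eqI[OF R M_module[OF P] _ _ B_finite _ a])
    show "linear_map R (free_mod R (B Q)) (M P) (\<lambda>a. nat_of_basis v P (free_map R (B Q) (g P Q \<rho>) a))"
      by (rule linear_map_comp[OF linear_map_free_map[OF R_ring B_finite g_Pi[rule_format, OF \<rho>]]
            linear_map_nat_of_basis[OF P]])
    show "linear_map R (free_mod R (B Q)) (M P) (\<lambda>a. Mmor P Q \<rho> (nat_of_basis v Q a))"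
      by (rule linear_map_comp[OF linear_map_nat_of_basis[OF Q] Mmor_linear[OF P Q \<rho>]])
    fix c assume c: "c \<in> B Q"
    have "g P Q \<rho> c \<in> B P" using g_Pi[rule_format, OF \<rho>] c by blast
    then show "nat_of_basis v P (free_map R (B Q) (g P Q \<rho>) (basis_vec R c))
        = Mmor P Q \<rho> (nat_of_basis v Q (basis_vec R c))"
      unfolding free_map_basis_vec[OF R_ring B_finite c]
      by (simp add: nat_of_basis_basis_vec[OF P] nat_of_basis_basis_vec[OF Q c] v_natural[OF P Q \<rho> c])
  qed
qed

end

lemma nat_trans_add_closed:
  assumes \<eta>: "\<eta> \<in> NT" and \<mu>: "\<mu> \<in> NT"
  shows "(\<lambda>P\<in>C. \<lambda>a\<in>carrier (free_mod R (B P)). \<eta> P a \<oplus>\<^bsub>M P\<^esub> \<mu> P a) \<in> NT"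
  unfolding nat_trans_def
proof (intro CollectI conjI ballI)
  show "(\<lambda>P\<in>C. \<lambda>a\<in>carrier (free_mod R (B P)). \<eta> P a \<oplus>\<^bsub>M P\<^esub> \<mu> P a) \<in> extensional C" by simp
next
  fix P assume P: "P \<in> C"
  interpret N: module R "M P" by (rule M_module[OF P])
  show "(\<lambda>P\<in>C. \<lambda>a\<in>carrier (free_mod R (B P)). \<eta> P a \<oplus>\<^bsub>M P\<^esub> \<mu> P a) P \<in> extensional (carrier (free_mod R (B P)))"
    using P by simp
  note l\<eta> = linear_mapD[OF nat_trans_linear[OF \<eta> P]] and l\<mu> = linear_mapD[OF nat_trans_linear[OF \<mu> P]]
  have "linear_map R (free_mod R (B P)) (M P) (\<lambda>a. \<eta> P a \<oplus>\<^bsub>M P\<^esub> \<mu> P a)"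
    unfolding linear_map_def
    using l\<eta> l\<mu> free_mod_add_closed[OF R_ring] free_mod_smult_closed[OF R_ring]
    by (auto simp: N.a_ac N.smult_r_distr)
  then show "linear_map R (free_mod R (B P)) (M P) ((\<lambda>P\<in>C. \<lambda>a\<in>carrier (free_mod R (B P)). \<eta> P a \<oplus>\<^bsub>M P\<^esub> \<mu> P a) P)"
    by (rule linear_map_free_mod_cong[OF R_ring]) (simp add: P)
next
  fix P Q \<rho> a assume P: "P \<in> C" and Q: "Q \<in> C" and \<rho>: "\<rho> \<in> F P Q" and a: "a \<in> carrier (free_mod R (B Q))"
  have "Mmor P Q \<rho> (\<eta> Q a \<oplus>\<^bsub>M Q\<^esub> \<mu> Q a) = Mmor P Q \<rho> (\<eta> Q a) \<oplus>\<^bsub>M P\<^esub> Mmor P Q \<rho> (\<mu> Q a)"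
    by (rule linear_mapD(2)[OF Mmor_linear[OF P Q \<rho>] linear_mapD(1)[OF nat_trans_linear[OF \<eta> Q] a]
          linear_mapD(1)[OF nat_trans_linear[OF \<mu> Q] a]])
  then show "(\<lambda>P\<in>C. \<lambda>a\<in>carrier (free_mod R (B P)). \<eta> P a \<oplus>\<^bsub>M P\<^esub> \<mu> P a) P (free_map R (B Q) (g P Q \<rho>) a) =
         Mmor P Q \<rho> ((\<lambda>P\<in>C. \<lambda>a\<in>carrier (free_mod R (B P)). \<eta> P a \<oplus>\<^bsub>M P\<^esub> \<mu> P a) Q a)"
    using P Q a free_map_in_free_mod[OF R_ring B_finite g_Pi[rule_format, OF \<rho>] a]
      nat_trans_natural[OF \<eta> P Q \<rho> a] nat_trans_natural[OF \<mu> P Q \<rho> a] by simp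
qed

end

sublocale rep1: rep_classes G F F1 S by (rule rep_classes_F1)
sublocale rep2: rep_classes G F F2 S' by (rule rep_classes_F2)
sublocale repe: rep_classes G F Fe S' by (rule rep_classes_Fe)

section \<open>The complex \<open>CX\<close>\<close>

abbreviation "B0 \<equiv> CX0_basis F F1 F2 S S'"
abbreviation "g0 P Q \<rho> \<equiv> map_sum (rep_pre F F1 S P \<rho>) (rep_pre F F2 S' P \<rho>)"
abbreviation "B1 \<equiv> CX1_basis F Fe S'"
abbreviation "g1 P Q \<rho> \<equiv> rep_pre F Fe S' P \<rho>"
abbreviation "N0 \<equiv> nat_trans G F C R B0 (CX0_map R F F1 F2 S S') M Mmap"
abbreviation "N1 \<equiv> nat_trans G F C R B1 (CX1_map R F Fe S') M Mmap"
abbreviation "e \<equiv> basis_vec R"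
abbreviation "fmap \<equiv> f_map R F F1 F2 Fe S S'"

lemma CX0_map_eq: "CX0_map R F F1 F2 S S' = (\<lambda>P Q \<rho>. free_map R (B0 Q) (g0 P Q \<rho>))"
  by (intro ext) (simp add: CX0_map_def)

lemma CX1_map_eq: "CX1_map R F Fe S' = (\<lambda>P Q \<rho>. free_map R (B1 Q) (g1 P Q \<rho>))"
  by (intro ext) (simp add: CX1_map_def)

lemma finite_B0: "finite (B0 P)"
  unfolding CX0_basis_def using rep1.finite_Rep[OF fin] rep2.finite_Rep[OF fin] by simp

lemma finite_B1: "finite (B1 P)"
  unfolding CX1_basis_def using repe.finite_Rep[OF fin] .

lemma g0_Pi: "\<forall>P Q. \<forall>\<rho>\<in>F P Q. g0 P Q \<rho> \<in> B0 Q \<rightarrow> B0 P"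
  unfolding CX0_basis_def using rep1.rep_pre_Pi rep2.rep_pre_Pi by (auto simp: Pi_def)

lemma g1_Pi: "\<forall>P Q. \<forall>\<rho>\<in>F P Q. g1 P Q \<rho> \<in> B1 Q \<rightarrow> B1 P"
  unfolding CX1_basis_def using repe.rep_pre_Pi by blast

lemmas N0_linear = nat_trans_linear[of B0 g0, OF finite_B0 g0_Pi, folded CX0_map_eq]
lemmas N0_basis_carrier = nat_trans_basis_carrier[of B0 g0, OF finite_B0 g0_Pi, folded CX0_map_eq]
lemmas N0_basis_natural = nat_trans_basis_natural[of B0 g0, OF finite_B0 g0_Pi, folded CX0_map_eq]
lemmas N0_eqI = nat_trans_eqI[of B0 g0, OF finite_B0 g0_Pi, folded CX0_map_eq]
lemmas N0_nat_of_basis = nat_of_basis_in_nat_trans[of B0 g0, OF finite_B0 g0_Pi, folded CX0_map_eq]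
lemmas N0_nat_of_basis_basis_vec = nat_of_basis_basis_vec[of B0 g0, OF finite_B0 g0_Pi]
lemmas N1_basis_carrier = nat_trans_basis_carrier[of B1 g1, OF finite_B1 g1_Pi, folded CX1_map_eq]
lemmas N1_basis_natural = nat_trans_basis_natural[of B1 g1, OF finite_B1 g1_Pi, folded CX1_map_eq]
lemmas N1_eqI = nat_trans_eqI[of B1 g1, OF finite_B1 g1_Pi, folded CX1_map_eq]
lemmas N1_nat_of_basis = nat_of_basis_in_nat_trans[of B1 g1, OF finite_B1 g1_Pi, folded CX1_map_eq]
lemmas N1_nat_of_basis_basis_vec = nat_of_basis_basis_vec[of B1 g1, OF finite_B1 g1_Pi]
lemmas N1_add_closed = nat_trans_add_closed[of B1 g1, OF finite_B1 g1_Pi, folded CX1_map_eq]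

lemma rep_cls_Fe_in_B1: "\<phi> \<in> F P S' \<Longrightarrow> rep_cls F Fe S' P \<phi> \<in> B1 P"
  unfolding CX1_basis_def by (rule repe.rep_cls_in_Rep)

lemma B1_cases:
  assumes "d \<in> B1 P"
  obtains \<phi> where "\<phi> \<in> F P S'" "d = rep_cls F Fe S' P \<phi>"
  using repe.Rep_cases assms unfolding CX1_basis_def by blast

definition to_F1_cls :: "'a set \<Rightarrow> ('a \<Rightarrow> 'a) set \<Rightarrow> ('a \<Rightarrow> 'a) set" where
  "to_F1_cls P d = rep_cls F F1 S P (SOME \<phi>. \<phi> \<in> d)"

definition to_F2_cls :: "'a set \<Rightarrow> ('a \<Rightarrow> 'a) set \<Rightarrow> ('a \<Rightarrow> 'a) set" where
  "to_F2_cls P d = rep_cls F F2 S' P (SOME \<phi>. \<phi> \<in> d)"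

lemma to_F1_cls_rep_cls:
  assumes \<phi>: "\<phi> \<in> F P S'"
  shows "to_F1_cls P (rep_cls F Fe S' P \<phi>) = rep_cls F F1 S P \<phi>"
proof -
  have "(SOME \<psi>. \<psi> \<in> rep_cls F Fe S' P \<phi>) \<in> rep_cls F Fe S' P \<phi>" by (rule repe.rep_cls_SOME[OF \<phi>])
  then have "(SOME \<psi>. \<psi> \<in> rep_cls F Fe S' P \<phi>) \<in> rep_cls F F1 S P \<phi>"
    using rep_cls_mono[OF Fe_F1] F_codomain_S by blast
  then show ?thesis unfolding to_F1_cls_def by (rule rep1.rep_cls_eq[OF F_codomain_S[OF \<phi>]])
qed

lemma to_F2_cls_rep_cls:
  assumes \<phi>: "\<phi> \<in> F P S'"
  shows "to_F2_cls P (rep_cls F Fe S' P \<phi>) = rep_cls F F2 S' P \<phi>"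
proof -
  have "(SOME \<psi>. \<psi> \<in> rep_cls F Fe S' P \<phi>) \<in> rep_cls F Fe S' P \<phi>" by (rule repe.rep_cls_SOME[OF \<phi>])
  then have "(SOME \<psi>. \<psi> \<in> rep_cls F Fe S' P \<phi>) \<in> rep_cls F F2 S' P \<phi>"
    using rep_cls_mono[where TH=S' and TH'=S', OF Fe_F2 subset_refl] by blast
  then show ?thesis unfolding to_F2_cls_def by (rule rep2.rep_cls_eq[OF \<phi>])
qed

lemma to_F1_cls_Pi: "to_F1_cls P \<in> B1 P \<rightarrow> Rep F F1 S P"
proof
  fix d assume "d \<in> B1 P"
  then obtain \<phi> where "\<phi> \<in> F P S'" "d = rep_cls F Fe S' P \<phi>" by (rule B1_cases)
  then show "to_F1_cls P d \<in> Rep F F1 S P"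
    using to_F1_cls_rep_cls rep1.rep_cls_in_Rep[OF F_codomain_S] by simp
qed

lemma to_F2_cls_Pi: "to_F2_cls P \<in> B1 P \<rightarrow> Rep F F2 S' P"
proof
  fix d assume "d \<in> B1 P"
  then obtain \<phi> where "\<phi> \<in> F P S'" "d = rep_cls F Fe S' P \<phi>" by (rule B1_cases)
  then show "to_F2_cls P d \<in> Rep F F2 S' P"
    using to_F2_cls_rep_cls rep2.rep_cls_in_Rep by simp
qed

lemma f_map_eq:
  "fmap P a = (\<lambda>z. case z of Inl c \<Rightarrow> \<ominus>\<^bsub>R\<^esub> free_map R (B1 P) (to_F1_cls P) a c
                                             | Inr c \<Rightarrow> free_map R (B1 P) (to_F2_cls P) a c)"
  unfolding f_map_def free_map_def to_F1_cls_def to_F2_cls_def by simp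

lemma linear_map_f_map:
  "linear_map R (free_mod R (B1 P)) (free_mod R (B0 P)) (fmap P)"
  unfolding f_map_eq[abs_def] CX0_basis_def
  by (rule linear_map_free_mod_Plus[OF R linear_map_free_map[OF R_ring finite_B1 to_F1_cls_Pi]
        linear_map_free_map[OF R_ring finite_B1 to_F2_cls_Pi]])

lemma nat_f_map_basis_vec:
  assumes \<eta>: "\<eta> \<in> N0" and P: "P \<in> C" and d: "d \<in> B1 P"
  shows "\<eta> P (fmap P (e d))
    = \<ominus>\<^bsub>M P\<^esub> \<eta> P (e (Inl (to_F1_cls P d))) \<oplus>\<^bsub>M P\<^esub> \<eta> P (e (Inr (to_F2_cls P d)))"
proof -
  interpret R: cring R by (rule R)
  interpret N: module R "M P" by (rule M_module[OF P])
  let ?e1 = "e (Inl (to_F1_cls P d))" and ?e2 = "e (Inr (to_F2_cls P d))"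
  have F1_cls: "to_F1_cls P d \<in> Rep F F1 S P" using to_F1_cls_Pi d by blast
  have F2_cls: "to_F2_cls P d \<in> Rep F F2 S' P" using to_F2_cls_Pi d by blast
  have e1: "?e1 \<in> carrier (free_mod R (B0 P))"
    unfolding CX0_basis_def by (rule basis_vec_in_free_mod[OF R_ring]) (simp add: F1_cls)
  have e2: "?e2 \<in> carrier (free_mod R (B0 P))"
    unfolding CX0_basis_def by (rule basis_vec_in_free_mod[OF R_ring]) (simp add: F2_cls)
  note lin = linear_mapD[OF N0_linear[OF \<eta> P]]
  have minus_one: "\<ominus>\<^bsub>R\<^esub> \<one>\<^bsub>R\<^esub> \<in> carrier R" by simp
  have f_e: "fmap P (e d) = ((\<ominus>\<^bsub>R\<^esub> \<one>\<^bsub>R\<^esub>) \<odot>\<^bsub>free_mod R (B0 P)\<^esub> ?e1) \<oplus>\<^bsub>free_mod R (B0 P)\<^esub> ?e2"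
  proof (rule ext)
    fix z
    from F1_cls show "fmap P (e d) z
        = (((\<ominus>\<^bsub>R\<^esub> \<one>\<^bsub>R\<^esub>) \<odot>\<^bsub>free_mod R (B0 P)\<^esub> ?e1) \<oplus>\<^bsub>free_mod R (B0 P)\<^esub> ?e2) z"
      unfolding f_map_eq free_map_basis_vec[OF R_ring finite_B1 d]
      by (cases z) (simp_all add: free_mod_smult free_mod_add basis_vec_def CX0_basis_def)
  qed
  have "\<eta> P (fmap P (e d)) = \<eta> P ((\<ominus>\<^bsub>R\<^esub> \<one>\<^bsub>R\<^esub>) \<odot>\<^bsub>free_mod R (B0 P)\<^esub> ?e1) \<oplus>\<^bsub>M P\<^esub> \<eta> P ?e2"
    unfolding f_e
    by (rule lin(2)[OF free_mod_smult_closed[OF R_ring minus_one e1] e2])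
  also have "\<eta> P ((\<ominus>\<^bsub>R\<^esub> \<one>\<^bsub>R\<^esub>) \<odot>\<^bsub>free_mod R (B0 P)\<^esub> ?e1) = (\<ominus>\<^bsub>R\<^esub> \<one>\<^bsub>R\<^esub>) \<odot>\<^bsub>M P\<^esub> \<eta> P ?e1"
    by (rule lin(3)[OF minus_one e1])
  also have "\<dots> = \<ominus>\<^bsub>M P\<^esub> \<eta> P ?e1"
    using N.smult_l_minus[OF R.one_closed lin(1)[OF e1]] lin(1)[OF e1] by simp
  finally show ?thesis .
qed

lemma nat_f_map_rep_cls:
  assumes \<eta>: "\<eta> \<in> N0" and P: "P \<in> C" and \<phi>: "\<phi> \<in> F P S'"
  shows "\<eta> P (fmap P (e (rep_cls F Fe S' P \<phi>)))
     = \<ominus>\<^bsub>M P\<^esub> \<eta> P (e (Inl (rep_cls F F1 S P \<phi>))) \<oplus>\<^bsub>M P\<^esub> \<eta> P (e (Inr (rep_cls F F2 S' P \<phi>)))"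
  using nat_f_map_basis_vec[OF \<eta> P rep_cls_Fe_in_B1[OF \<phi>]] to_F1_cls_rep_cls[OF \<phi>] to_F2_cls_rep_cls[OF \<phi>]
  by simp

lemma N0_Inl_carrier: "\<eta> \<in> N0 \<Longrightarrow> P \<in> C \<Longrightarrow> c \<in> Rep F F1 S P \<Longrightarrow> \<eta> P (e (Inl c)) \<in> carrier (M P)"
  using N0_basis_carrier unfolding CX0_basis_def by simp

lemma N0_Inr_carrier: "\<eta> \<in> N0 \<Longrightarrow> P \<in> C \<Longrightarrow> c \<in> Rep F F2 S' P \<Longrightarrow> \<eta> P (e (Inr c)) \<in> carrier (M P)"
  using N0_basis_carrier unfolding CX0_basis_def by simp

lemma N0_Inl_natural:
  "\<eta> \<in> N0 \<Longrightarrow> P \<in> C \<Longrightarrow> Q \<in> C \<Longrightarrow> \<rho> \<in> F P Q \<Longrightarrow> c \<in> Rep F F1 S Q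
   \<Longrightarrow> \<eta> P (e (Inl (rep_pre F F1 S P \<rho> c))) = Mmor P Q \<rho> (\<eta> Q (e (Inl c)))"
  using N0_basis_natural[of \<eta> P Q \<rho> "Inl c"] unfolding CX0_basis_def by simp

lemma N0_Inr_natural:
  "\<eta> \<in> N0 \<Longrightarrow> P \<in> C \<Longrightarrow> Q \<in> C \<Longrightarrow> \<rho> \<in> F P Q \<Longrightarrow> c \<in> Rep F F2 S' Q
   \<Longrightarrow> \<eta> P (e (Inr (rep_pre F F2 S' P \<rho> c))) = Mmor P Q \<rho> (\<eta> Q (e (Inr c)))"
  using N0_basis_natural[of \<eta> P Q \<rho> "Inr c"] unfolding CX0_basis_def by simp

lemma N0_Inl_Yoneda:
  assumes \<eta>: "\<eta> \<in> N0"
  shows "\<And>P \<phi>. P \<in> C \<Longrightarrow> \<phi> \<in> F P S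
      \<Longrightarrow> \<eta> P (e (Inl (rep_cls F F1 S P \<phi>))) = Mmor P S \<phi> (\<eta> S (e (Inl (rep_cls F F1 S S (incl S)))))"
    and "\<And>P Q \<phi>. P \<in> C \<Longrightarrow> Q \<in> C \<Longrightarrow> \<phi> \<in> F1 P Q
      \<Longrightarrow> Mmor P Q \<phi> (\<eta> Q (e (Inl (rep_cls F F1 S Q (incl Q))))) = \<eta> P (e (Inl (rep_cls F F1 S P (incl P))))"
    and "\<eta> S (e (Inl (rep_cls F F1 S S (incl S)))) \<in> fixed_pts G C M Mmap F1 S"
  using Rep_nat_rep_cls[OF rep_classes_F1 S_in_C N0_Inl_carrier[OF \<eta>] N0_Inl_natural[OF \<eta>]]
    Rep_nat_incl_compatible[OF rep_classes_F1 S_in_C N0_Inl_carrier[OF \<eta>] N0_Inl_natural[OF \<eta>]]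
    Rep_nat_incl_fixed[OF rep_classes_F1 S_in_C N0_Inl_carrier[OF \<eta>] N0_Inl_natural[OF \<eta>]]
  by blast+

lemma N0_Inr_Yoneda:
  assumes \<eta>: "\<eta> \<in> N0"
  shows "\<And>P \<phi>. P \<in> C \<Longrightarrow> \<phi> \<in> F P S'
      \<Longrightarrow> \<eta> P (e (Inr (rep_cls F F2 S' P \<phi>))) = Mmor P S' \<phi> (\<eta> S' (e (Inr (rep_cls F F2 S' S' (incl S')))))"
    and "\<And>P Q \<phi>. P \<in> C \<Longrightarrow> Q \<in> C \<Longrightarrow> \<phi> \<in> F2 P Q
      \<Longrightarrow> Mmor P Q \<phi> (\<eta> Q (e (Inr (rep_cls F F2 S' Q (incl Q))))) = \<eta> P (e (Inr (rep_cls F F2 S' P (incl P))))"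
    and "\<eta> S' (e (Inr (rep_cls F F2 S' S' (incl S')))) \<in> fixed_pts G C M Mmap F2 S'"
  using Rep_nat_rep_cls[OF rep_classes_F2 S'_in_C N0_Inr_carrier[OF \<eta>] N0_Inr_natural[OF \<eta>]]
    Rep_nat_incl_compatible[OF rep_classes_F2 S'_in_C N0_Inr_carrier[OF \<eta>] N0_Inr_natural[OF \<eta>]]
    Rep_nat_incl_fixed[OF rep_classes_F2 S'_in_C N0_Inr_carrier[OF \<eta>] N0_Inr_natural[OF \<eta>]]
  by blast+

lemma N1_Yoneda:
  assumes \<eta>: "\<eta> \<in> N1"
  shows "\<And>P \<phi>. P \<in> C \<Longrightarrow> \<phi> \<in> F P S'
      \<Longrightarrow> \<eta> P (e (rep_cls F Fe S' P \<phi>)) = Mmor P S' \<phi> (\<eta> S' (e (rep_cls F Fe S' S' (incl S'))))"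
    and "\<eta> S' (e (rep_cls F Fe S' S' (incl S'))) \<in> fixed_pts G C M Mmap Fe S'"
proof -
  have carrier: "\<eta> P (e c) \<in> carrier (M P)" if "P \<in> C" "c \<in> Rep F Fe S' P" for P c
    using N1_basis_carrier[OF \<eta>] that unfolding CX1_basis_def by blast
  have natural: "\<eta> P (e (rep_pre F Fe S' P \<rho> c)) = Mmor P Q \<rho> (\<eta> Q (e c))"
    if "P \<in> C" "Q \<in> C" "\<rho> \<in> F P Q" "c \<in> Rep F Fe S' Q" for P Q \<rho> c
    using N1_basis_natural[OF \<eta>] that unfolding CX1_basis_def by blast
  show "\<And>P \<phi>. P \<in> C \<Longrightarrow> \<phi> \<in> F P S'
      \<Longrightarrow> \<eta> P (e (rep_cls F Fe S' P \<phi>)) = Mmor P S' \<phi> (\<eta> S' (e (rep_cls F Fe S' S' (incl S'))))"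
    by (rule Rep_nat_rep_cls[OF rep_classes_Fe S'_in_C carrier natural])
  show "\<eta> S' (e (rep_cls F Fe S' S' (incl S'))) \<in> fixed_pts G C M Mmap Fe S'"
    by (rule Rep_nat_incl_fixed[OF rep_classes_Fe S'_in_C carrier natural])
qed

section \<open>The kernel of \<open>f\<^sup>*\<close>\<close>

abbreviation "nm0 \<equiv> nat_mod G F C R B0 (CX0_map R F F1 F2 S S') M Mmap"
abbreviation "nm1 \<equiv> nat_mod G F C R B1 (CX1_map R F Fe S') M Mmap"
abbreviation "f_star \<equiv> fstar R F F1 F2 Fe S S' C"
abbreviation "ker_f_star \<equiv> {\<eta> \<in> N0. f_star \<eta> = \<zero>\<^bsub>nm1\<^esub>}"

lemma f_star_eq_zero_iff:
  "f_star \<eta> = \<zero>\<^bsub>nm1\<^esub> \<longleftrightarrow> (\<forall>P\<in>C. \<forall>a\<in>carrier (free_mod R (B1 P)). \<eta> P (fmap P a) = \<zero>\<^bsub>M P\<^esub>)"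
proof
  assume zero: "f_star \<eta> = \<zero>\<^bsub>nm1\<^esub>"
  show "\<forall>P\<in>C. \<forall>a\<in>carrier (free_mod R (B1 P)). \<eta> P (fmap P a) = \<zero>\<^bsub>M P\<^esub>"
  proof (intro ballI)
    fix P a assume "P \<in> C" "a \<in> carrier (free_mod R (B1 P))"
    moreover have "f_star \<eta> P a = \<zero>\<^bsub>nm1\<^esub> P a" using zero by simp
    ultimately show "\<eta> P (fmap P a) = \<zero>\<^bsub>M P\<^esub>" unfolding fstar_def nat_mod_zero by simp
  qed
next
  assume "\<forall>P\<in>C. \<forall>a\<in>carrier (free_mod R (B1 P)). \<eta> P (fmap P a) = \<zero>\<^bsub>M P\<^esub>"
  then show "f_star \<eta> = \<zero>\<^bsub>nm1\<^esub>" unfolding fstar_def nat_mod_zero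
    by (intro restrict_ext) simp
qed

definition ker_family :: "('a set \<Rightarrow> (('a \<Rightarrow> 'a) set + ('a \<Rightarrow> 'a) set \<Rightarrow> 'r) \<Rightarrow> 'm) \<Rightarrow> 'a set \<Rightarrow> 'm" where
  "ker_family \<eta> P = \<eta> P (e (Inl (rep_cls F F1 S P (incl P))))"

lemma incl_in_F_S': "P \<in> subgrps G S' \<Longrightarrow> incl P \<in> F P S'"
  using rep2.H_in_F[OF rep2.incl_in_H] by blast

context
  fixes \<eta>
  assumes \<eta>: "\<eta> \<in> N0"
    and \<eta>_ker: "\<forall>P\<in>C. \<forall>a\<in>carrier (free_mod R (B1 P)). \<eta> P (fmap P a) = \<zero>\<^bsub>M P\<^esub>"
begin

lemma kernel_Inl_eq_Inr:
  assumes P: "P \<in> C" and \<phi>: "\<phi> \<in> F P S'"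
  shows "\<eta> P (e (Inl (rep_cls F F1 S P \<phi>))) = \<eta> P (e (Inr (rep_cls F F2 S' P \<phi>)))"
proof -
  interpret N: module R "M P" by (rule M_module[OF P])
  have "\<ominus>\<^bsub>M P\<^esub> \<eta> P (e (Inl (rep_cls F F1 S P \<phi>))) \<oplus>\<^bsub>M P\<^esub> \<eta> P (e (Inr (rep_cls F F2 S' P \<phi>))) = \<zero>\<^bsub>M P\<^esub>"
    using \<eta>_ker P basis_vec_in_free_mod[OF R_ring rep_cls_Fe_in_B1[OF \<phi>]] nat_f_map_rep_cls[OF \<eta> P \<phi>]
    by simp
  moreover have "\<eta> P (e (Inl (rep_cls F F1 S P \<phi>))) \<in> carrier (M P)"
    by (rule N0_Inl_carrier[OF \<eta> P rep1.rep_cls_in_Rep[OF F_codomain_S[OF \<phi>]]])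
  moreover have "\<eta> P (e (Inr (rep_cls F F2 S' P \<phi>))) \<in> carrier (M P)"
    by (rule N0_Inr_carrier[OF \<eta> P rep2.rep_cls_in_Rep[OF \<phi>]])
  ultimately show ?thesis
    using N.minus_equality N.minus_minus N.add.inv_closed by metis
qed

lemma ker_family_carrier: "P \<in> C \<Longrightarrow> ker_family \<eta> P \<in> carrier (M P)"
  unfolding ker_family_def using N0_Inl_carrier[OF \<eta> _ rep1.rep_cls_in_Rep[OF incl_in_F]] .

lemma ker_family_compatible:
  assumes P: "P \<in> C" and Q: "Q \<in> C" and \<phi>: "\<phi> \<in> F P Q"
  shows "Mmor P Q \<phi> (ker_family \<eta> Q) = ker_family \<eta> P"
proof (rule compatible_generated[OF ker_family_carrier _ _ \<phi> P Q])
  fix A B \<psi> assume "A \<in> C" "B \<in> C" "\<psi> \<in> F1 A B"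
  then show "Mmor A B \<psi> (ker_family \<eta> B) = ker_family \<eta> A"
    unfolding ker_family_def by (rule N0_Inl_Yoneda(2)[OF \<eta>])
next
  fix A B \<psi> assume A: "A \<in> C" and B: "B \<in> C" and \<psi>: "\<psi> \<in> F2 A B"
  have A': "incl A \<in> F A S'" and B': "incl B \<in> F B S'"
    using fusion_system_subgrps[OF F2_fs \<psi>] incl_in_F_S' by auto
  show "Mmor A B \<psi> (ker_family \<eta> B) = ker_family \<eta> A"
    unfolding ker_family_def kernel_Inl_eq_Inr[OF A A'] kernel_Inl_eq_Inr[OF B B']
    by (rule N0_Inr_Yoneda(2)[OF \<eta> A B \<psi>])
qed

lemma kernel_basis_value:
  assumes P: "P \<in> C" and w: "w \<in> B0 P"
  shows "\<eta> P (e w) = ker_family \<eta> P"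
proof -
  obtain \<phi> where \<phi>: "\<phi> \<in> F P S" and w_Inl: "\<eta> P (e w) = \<eta> P (e (Inl (rep_cls F F1 S P \<phi>)))"
  proof (cases w)
    case (Inl c)
    then have "c \<in> Rep F F1 S P" using w unfolding CX0_basis_def by simp
    then obtain \<phi> where "\<phi> \<in> F P S" "c = rep_cls F F1 S P \<phi>" by (rule rep1.Rep_cases)
    then show ?thesis using that Inl by simp
  next
    case (Inr c)
    then have "c \<in> Rep F F2 S' P" using w unfolding CX0_basis_def by simp
    then obtain \<phi> where \<phi>: "\<phi> \<in> F P S'" and c: "c = rep_cls F F2 S' P \<phi>" by (rule rep2.Rep_cases)
    show ?thesis by (rule that[OF F_codomain_S[OF \<phi>]]) (simp add: Inr c kernel_Inl_eq_Inr[OF P \<phi>])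
  qed
  have "\<eta> P (e (Inl (rep_cls F F1 S P \<phi>))) = Mmor P S \<phi> (ker_family \<eta> S)"
    unfolding ker_family_def by (rule N0_Inl_Yoneda(1)[OF \<eta> P \<phi>])
  then show ?thesis using w_Inl ker_family_compatible[OF P S_in_C \<phi>] by simp
qed

lemma ker_family_fixed: "ker_family \<eta> S \<in> fixed_pts G C M Mmap F S"
  unfolding fixed_pts_def
proof (rule CollectI, rule exI[of _ "ker_family \<eta>"], intro conjI ballI impI refl)
  fix P assume "P \<in> C" then show "ker_family \<eta> P \<in> carrier (M P)" by (rule ker_family_carrier)
next
  fix P Q \<rho> assume P: "P \<in> C" and Q: "Q \<in> C" and "\<rho> \<in> orb_hom G F P Q"
  then obtain \<phi> where "\<phi> \<in> F P Q" "\<rho> = orb_cls G P Q \<phi>" unfolding orb_hom_def by blast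
  then show "Mmap P Q \<rho> (ker_family \<eta> Q) = ker_family \<eta> P" using ker_family_compatible[OF P Q] by simp
qed

end

lemma ker_f_starD:
  assumes "\<eta> \<in> ker_f_star"
  shows "\<eta> \<in> N0" "\<forall>P\<in>C. \<forall>a\<in>carrier (free_mod R (B1 P)). \<eta> P (fmap P a) = \<zero>\<^bsub>M P\<^esub>"
  using assms unfolding mem_Collect_eq f_star_eq_zero_iff by blast+

lemma inj_on_ker_family: "inj_on (\<lambda>\<eta>. ker_family \<eta> S) ker_f_star"
proof (rule inj_onI)
  fix \<eta> \<mu> assume \<eta>: "\<eta> \<in> ker_f_star" and \<mu>: "\<mu> \<in> ker_f_star" and eq: "ker_family \<eta> S = ker_family \<mu> S"
  have "ker_family \<eta> P = ker_family \<mu> P" if P: "P \<in> C" for P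
    using ker_family_compatible[OF ker_f_starD[OF \<eta>] P S_in_C incl_in_F[OF P]]
      ker_family_compatible[OF ker_f_starD[OF \<mu>] P S_in_C incl_in_F[OF P]] eq by simp
  then show "\<eta> = \<mu>"
    using N0_eqI[OF ker_f_starD(1)[OF \<eta>] ker_f_starD(1)[OF \<mu>]]
      kernel_basis_value[OF ker_f_starD[OF \<eta>]] kernel_basis_value[OF ker_f_starD[OF \<mu>]] by simp
qed

text \<open>An element of \<open>M\<^sup>F\<close> spreads to the transformation that is constant on each basis
  \<open>B0 P\<close>; its two components cancel under \<open>f\<close>.\<close>

lemma ker_family_surj: "fixed_pts G C M Mmap F S \<subseteq> (\<lambda>\<eta>. ker_family \<eta> S) ` ker_f_star"
proof
  fix x assume "x \<in> fixed_pts G C M Mmap F S"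
  then obtain y where y: "x = y S" "\<forall>P\<in>C. P \<subseteq> S \<longrightarrow> y P \<in> carrier (M P)"
    "\<forall>P\<in>C. \<forall>Q\<in>C. P \<subseteq> S \<longrightarrow> Q \<subseteq> S \<longrightarrow> (\<forall>\<rho>\<in>orb_hom G F P Q. Mmap P Q \<rho> (y Q) = y P)"
    unfolding fixed_pts_def by blast
  have yC: "y P \<in> carrier (M P)" if "P \<in> C" for P using y(2) subgrpsD(1)[OF C_subgrpsD] that by blast
  have y_nat: "Mmor P Q \<phi> (y Q) = y P" if "P \<in> C" "Q \<in> C" "\<phi> \<in> F P Q" for P Q \<phi>
    using y(3) that subgrpsD(1)[OF C_subgrpsD] unfolding orb_hom_def by blast
  define \<eta> where "\<eta> = nat_of_basis B0 (\<lambda>P c. y P)"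
  have \<eta>: "\<eta> \<in> N0" unfolding \<eta>_def
    by (rule N0_nat_of_basis) (auto simp: yC y_nat)
  have \<eta>_basis: "\<eta> P (e w) = y P" if "P \<in> C" "w \<in> B0 P" for P w
    unfolding \<eta>_def by (rule N0_nat_of_basis_basis_vec) (auto simp: yC y_nat that)
  have "\<eta> P (fmap P a) = \<zero>\<^bsub>M P\<^esub>" if P: "P \<in> C" and a: "a \<in> carrier (free_mod R (B1 P))" for P a
  proof (rule linear_map_free_mod_eqI[OF R M_module[OF P] linear_map_comp[OF linear_map_f_map N0_linear[OF \<eta> P]]
        linear_map_zero_fun[OF M_module[OF P]] finite_B1 _ a])
    interpret N: module R "M P" by (rule M_module[OF P])
    fix d assume d: "d \<in> B1 P"
    have "Inl (to_F1_cls P d) \<in> B0 P" "Inr (to_F2_cls P d) \<in> B0 P"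
      using to_F1_cls_Pi to_F2_cls_Pi d unfolding CX0_basis_def by auto
    then show "\<eta> P (fmap P (e d)) = \<zero>\<^bsub>M P\<^esub>"
      using nat_f_map_basis_vec[OF \<eta> P d] \<eta>_basis[OF P] yC[OF P] by (simp add: N.l_neg)
  qed
  then have "\<eta> \<in> ker_f_star" using \<eta> f_star_eq_zero_iff by blast
  moreover have "ker_family \<eta> S = x"
    unfolding ker_family_def y(1)
    by (rule \<eta>_basis[OF S_in_C]) (simp add: CX0_basis_def rep1.rep_cls_in_Rep[OF incl_in_F[OF S_in_C]])
  ultimately show "x \<in> (\<lambda>\<eta>. ker_family \<eta> S) ` ker_f_star" by blast
qed

lemma kernel_iso: "mod_iso R (submod nm0 ker_f_star) (submod (M S) (fixed_pts G C M Mmap F S))"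
proof -
  have into: "ker_family \<eta> S \<in> fixed_pts G C M Mmap F S" if "\<eta> \<in> ker_f_star" for \<eta>
    using ker_family_fixed ker_f_starD[OF that] .
  have bij: "bij_betw (\<lambda>\<eta>. ker_family \<eta> S) ker_f_star (fixed_pts G C M Mmap F S)"
    unfolding bij_betw_def using inj_on_ker_family ker_family_surj into by blast
  have "e (Inl (rep_cls F F1 S S (incl S))) \<in> carrier (free_mod R (B0 S))"
    unfolding CX0_basis_def
    by (rule basis_vec_in_free_mod[OF R_ring]) (simp add: rep1.rep_cls_in_Rep[OF incl_in_F[OF S_in_C]])
  then have "linear_map R (submod nm0 ker_f_star) (submod (M S) (fixed_pts G C M Mmap F S)) (\<lambda>\<eta>. ker_family \<eta> S)"
    unfolding linear_map_def submod_def
    using into S_in_C by (auto simp: ker_family_def nat_mod_add nat_mod_smult)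
  then show ?thesis unfolding mod_iso_def using bij by (auto simp: submod_def)
qed

section \<open>The cokernel of \<open>f\<^sup>*\<close>\<close>

abbreviation "Fe_incl \<equiv> rep_cls F Fe S' S' (incl S')"

definition eval_incl :: "('a set \<Rightarrow> (('a \<Rightarrow> 'a) set \<Rightarrow> 'r) \<Rightarrow> 'm) \<Rightarrow> 'm" where
  "eval_incl \<eta> = \<eta> S' (e Fe_incl)"

abbreviation "fixed_sum \<equiv> set_add (M S')
   (Mmor S' S (incl S') ` fixed_pts G C M Mmap F1 S) (fixed_pts G C M Mmap F2 S')"

lemma incl_S'_in_F: "incl S' \<in> F S' S'" "incl S' \<in> F S' S"
  using incl_in_F_S' incl_in_F[OF S'_in_C] rep2.TH_subgrps(2) by auto

lemma Fe_incl_in_free_mod: "e Fe_incl \<in> carrier (free_mod R (B1 S'))"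
  using basis_vec_in_free_mod[OF R_ring rep_cls_Fe_in_B1[OF incl_S'_in_F(1)]] .

lemma inj_on_eval_incl: "inj_on eval_incl N1"
proof (rule inj_onI)
  fix \<eta> \<mu> assume \<eta>: "\<eta> \<in> N1" and \<mu>: "\<mu> \<in> N1" and eq: "eval_incl \<eta> = eval_incl \<mu>"
  show "\<eta> = \<mu>"
  proof (rule N1_eqI[OF \<eta> \<mu>])
    fix P d assume P: "P \<in> C" and d: "d \<in> B1 P"
    obtain \<phi> where \<phi>: "\<phi> \<in> F P S'" "d = rep_cls F Fe S' P \<phi>" using d by (rule B1_cases)
    show "\<eta> P (e d) = \<mu> P (e d)"
      using N1_Yoneda(1)[OF \<eta> P \<phi>(1)] N1_Yoneda(1)[OF \<mu> P \<phi>(1)] eq \<phi>(2) unfolding eval_incl_def by simp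
  qed
qed

lemma eval_incl_surj: "fixed_pts G C M Mmap Fe S' \<subseteq> eval_incl ` N1"
proof
  fix x assume x: "x \<in> fixed_pts G C M Mmap Fe S'"
  note rep_ext = rep_ext_carrier[OF rep_classes_Fe S'_in_C x] rep_ext_natural[OF rep_classes_Fe S'_in_C x]
  define \<eta> where "\<eta> = nat_of_basis B1 (rep_ext S' x)"
  have \<eta>: "\<eta> \<in> N1" unfolding \<eta>_def
    by (rule N1_nat_of_basis) (use rep_ext in \<open>auto simp: CX1_basis_def\<close>)
  have "\<eta> S' (e Fe_incl) = rep_ext S' x S' Fe_incl" unfolding \<eta>_def
    by (rule N1_nat_of_basis_basis_vec)
      (use rep_ext S'_in_C rep_cls_Fe_in_B1[OF incl_S'_in_F(1)] in \<open>auto simp: CX1_basis_def\<close>)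
  also have "\<dots> = x" by (rule rep_ext_incl[OF rep_classes_Fe S'_in_C x])
  finally show "x \<in> eval_incl ` N1" using \<eta> unfolding eval_incl_def by blast
qed

lemma bij_betw_eval_incl: "bij_betw eval_incl N1 (fixed_pts G C M Mmap Fe S')"
  unfolding bij_betw_def eval_incl_def
  using inj_on_eval_incl eval_incl_surj N1_Yoneda(2) unfolding eval_incl_def by blast

lemma f_star_natural_basis_vec:
  assumes \<eta>: "\<eta> \<in> N0" and P: "P \<in> C" and Q: "Q \<in> C" and \<rho>: "\<rho> \<in> F P Q" and d: "d \<in> B1 Q"
  shows "\<eta> P (fmap P (free_map R (B1 Q) (g1 P Q \<rho>) (e d))) = Mmor P Q \<rho> (\<eta> Q (fmap Q (e d)))"
proof -
  interpret NQ: module R "M Q" by (rule M_module[OF Q])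
  obtain \<phi> where \<phi>: "\<phi> \<in> F Q S'" and d_eq: "d = rep_cls F Fe S' Q \<phi>" using d by (rule B1_cases)
  let ?c1 = "rep_cls F F1 S Q \<phi>" and ?c2 = "rep_cls F F2 S' Q \<phi>"
  have c1: "?c1 \<in> Rep F F1 S Q" by (rule rep1.rep_cls_in_Rep[OF F_codomain_S[OF \<phi>]])
  have c2: "?c2 \<in> Rep F F2 S' Q" by (rule rep2.rep_cls_in_Rep[OF \<phi>])
  have "free_map R (B1 Q) (g1 P Q \<rho>) (e d) = e (g1 P Q \<rho> d)"
    by (rule free_map_basis_vec[OF R_ring finite_B1 d])
  also have "g1 P Q \<rho> d = rep_cls F Fe S' P (comp_on P \<phi> \<rho>)"
    unfolding d_eq by (rule repe.rep_pre_rep_cls[OF \<phi> \<rho>])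
  finally have "\<eta> P (fmap P (free_map R (B1 Q) (g1 P Q \<rho>) (e d)))
      = \<ominus>\<^bsub>M P\<^esub> \<eta> P (e (Inl (rep_cls F F1 S P (comp_on P \<phi> \<rho>))))
          \<oplus>\<^bsub>M P\<^esub> \<eta> P (e (Inr (rep_cls F F2 S' P (comp_on P \<phi> \<rho>))))"
    using nat_f_map_rep_cls[OF \<eta> P fusion_system_comp[OF F_fs \<rho> \<phi>]] by simp
  also have "\<dots> = \<ominus>\<^bsub>M P\<^esub> Mmor P Q \<rho> (\<eta> Q (e (Inl ?c1))) \<oplus>\<^bsub>M P\<^esub> Mmor P Q \<rho> (\<eta> Q (e (Inr ?c2)))"
    using N0_Inl_natural[OF \<eta> P Q \<rho> c1] N0_Inr_natural[OF \<eta> P Q \<rho> c2]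
      rep1.rep_pre_rep_cls[OF F_codomain_S[OF \<phi>] \<rho>] rep2.rep_pre_rep_cls[OF \<phi> \<rho>] by simp
  also have "\<dots> = Mmor P Q \<rho> (\<ominus>\<^bsub>M Q\<^esub> \<eta> Q (e (Inl ?c1)) \<oplus>\<^bsub>M Q\<^esub> \<eta> Q (e (Inr ?c2)))"
    using linear_mapD(2)[OF Mmor_linear[OF P Q \<rho>] NQ.a_inv_closed N0_Inr_carrier[OF \<eta> Q c2]]
      linear_map_minus[OF M_module[OF Q] M_module[OF P] Mmor_linear[OF P Q \<rho>]]
      N0_Inl_carrier[OF \<eta> Q c1] by simp
  also have "\<dots> = Mmor P Q \<rho> (\<eta> Q (fmap Q (e d)))"
    unfolding d_eq nat_f_map_rep_cls[OF \<eta> Q \<phi>] ..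
  finally show ?thesis .
qed

lemma f_star_in_N1:
  assumes \<eta>: "\<eta> \<in> N0"
  shows "f_star \<eta> \<in> N1"
  unfolding nat_trans_def
proof (intro CollectI conjI ballI)
  show "f_star \<eta> \<in> extensional C" unfolding fstar_def by simp
next
  fix P assume P: "P \<in> C"
  show "f_star \<eta> P \<in> extensional (carrier (free_mod R (B1 P)))" unfolding fstar_def using P by simp
  show "linear_map R (free_mod R (B1 P)) (M P) (f_star \<eta> P)"
    by (rule linear_map_free_mod_cong[OF R_ring linear_map_comp[OF linear_map_f_map N0_linear[OF \<eta> P]]])
      (use P in \<open>simp add: fstar_def\<close>)
next
  fix P Q \<rho> a assume P: "P \<in> C" and Q: "Q \<in> C" and \<rho>: "\<rho> \<in> F P Q" and a: "a \<in> carrier (free_mod R (B1 Q))"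
  have g1: "g1 P Q \<rho> \<in> B1 Q \<rightarrow> B1 P" using g1_Pi \<rho> by blast
  have "\<eta> P (fmap P (free_map R (B1 Q) (g1 P Q \<rho>) a)) = Mmor P Q \<rho> (\<eta> Q (fmap Q a))"
  proof (rule linear_map_free_mod_eqI[OF R M_module[OF P] _ _ finite_B1 _ a])
    show "linear_map R (free_mod R (B1 Q)) (M P) (\<lambda>a. \<eta> P (fmap P (free_map R (B1 Q) (g1 P Q \<rho>) a)))"
      by (rule linear_map_comp[OF linear_map_free_map[OF R_ring finite_B1 g1]
            linear_map_comp[OF linear_map_f_map N0_linear[OF \<eta> P]]])
    show "linear_map R (free_mod R (B1 Q)) (M P) (\<lambda>a. Mmor P Q \<rho> (\<eta> Q (fmap Q a)))"
      by (rule linear_map_comp[OF linear_map_comp[OF linear_map_f_map N0_linear[OF \<eta> Q]] Mmor_linear[OF P Q \<rho>]])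
  qed (rule f_star_natural_basis_vec[OF \<eta> P Q \<rho>])
  then show "f_star \<eta> P (CX1_map R F Fe S' P Q \<rho> a) = Mmor P Q \<rho> (f_star \<eta> Q a)"
    unfolding CX1_map_eq fstar_def
    using P Q a free_map_in_free_mod[OF R_ring finite_B1 g1 a] by simp
qed

lemma eval_incl_f_star:
  assumes \<eta>: "\<eta> \<in> N0"
  shows "eval_incl (f_star \<eta>) = \<ominus>\<^bsub>M S'\<^esub> \<eta> S' (e (Inl (rep_cls F F1 S S' (incl S'))))
     \<oplus>\<^bsub>M S'\<^esub> \<eta> S' (e (Inr (rep_cls F F2 S' S' (incl S'))))"
  unfolding eval_incl_def fstar_def
  using S'_in_C Fe_incl_in_free_mod nat_f_map_rep_cls[OF \<eta> S'_in_C incl_S'_in_F(1)] by simp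

lemma eval_incl_f_star_subset: "eval_incl ` f_star ` N0 \<subseteq> fixed_sum"
proof
  fix u assume "u \<in> eval_incl ` f_star ` N0"
  then obtain \<eta> where \<eta>: "\<eta> \<in> N0" and u: "u = eval_incl (f_star \<eta>)" by blast
  define x1 where "x1 = \<eta> S (e (Inl (rep_cls F F1 S S (incl S))))"
  define x2 where "x2 = \<eta> S' (e (Inr (rep_cls F F2 S' S' (incl S'))))"
  have x1: "x1 \<in> fixed_pts G C M Mmap F1 S" unfolding x1_def by (rule N0_Inl_Yoneda(3)[OF \<eta>])
  have x2: "x2 \<in> fixed_pts G C M Mmap F2 S'" unfolding x2_def by (rule N0_Inr_Yoneda(3)[OF \<eta>])
  have "\<ominus>\<^bsub>M S'\<^esub> \<eta> S' (e (Inl (rep_cls F F1 S S' (incl S')))) = \<ominus>\<^bsub>M S'\<^esub> Mmor S' S (incl S') x1"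
    unfolding x1_def N0_Inl_Yoneda(1)[OF \<eta> S'_in_C incl_S'_in_F(2)] ..
  also have "\<dots> = Mmor S' S (incl S') (\<ominus>\<^bsub>M S\<^esub> x1)"
    by (rule linear_map_minus[OF M_module[OF S_in_C] M_module[OF S'_in_C] Mmor_linear[OF S'_in_C S_in_C incl_S'_in_F(2)]
          fixed_pts_carrier[OF rep_classes_F1 S_in_C x1], symmetric])
  finally have "u = Mmor S' S (incl S') (\<ominus>\<^bsub>M S\<^esub> x1) \<oplus>\<^bsub>M S'\<^esub> x2"
    unfolding u eval_incl_f_star[OF \<eta>] x2_def by simp
  then show "u \<in> fixed_sum"
    unfolding set_add_def' using fixed_pts_neg[OF rep_classes_F1 x1] x2 by blast
qed

text \<open>\<open>\<iota>\<^sup>* x1 + x2\<close> is hit by the transformation extending \<open>-x1\<close> on the \<open>F1\<close>-summand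
  and \<open>x2\<close> on the \<open>F2\<close>-summand.\<close>

lemma fixed_sum_subset_eval_incl_f_star: "fixed_sum \<subseteq> eval_incl ` f_star ` N0"
proof
  fix u assume "u \<in> fixed_sum"
  then obtain x1 x2 where x1: "x1 \<in> fixed_pts G C M Mmap F1 S" and x2: "x2 \<in> fixed_pts G C M Mmap F2 S'"
    and u: "u = Mmor S' S (incl S') x1 \<oplus>\<^bsub>M S'\<^esub> x2"
    unfolding set_add_def' by blast
  interpret NS: module R "M S" by (rule M_module[OF S_in_C])
  define x1' where "x1' = \<ominus>\<^bsub>M S\<^esub> x1"
  have x1': "x1' \<in> fixed_pts G C M Mmap F1 S" unfolding x1'_def by (rule fixed_pts_neg[OF rep_classes_F1 x1])
  note ext1 = rep_ext_carrier[OF rep_classes_F1 S_in_C x1'] rep_ext_natural[OF rep_classes_F1 S_in_C x1']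
  note ext2 = rep_ext_carrier[OF rep_classes_F2 S'_in_C x2] rep_ext_natural[OF rep_classes_F2 S'_in_C x2]
  define v where "v = (\<lambda>P w. case w of Inl c \<Rightarrow> rep_ext S x1' P c | Inr c \<Rightarrow> rep_ext S' x2 P c)"
  have v_carrier: "P \<in> C \<Longrightarrow> v P \<in> B0 P \<rightarrow> carrier (M P)" for P
    using ext1(1) ext2(1) unfolding v_def CX0_basis_def by (auto split: sum.splits)
  have v_natural: "v P (g0 P Q \<rho> w) = Mmor P Q \<rho> (v Q w)"
    if "P \<in> C" "Q \<in> C" "\<rho> \<in> F P Q" "w \<in> B0 Q" for P Q \<rho> w
    using that ext1(2) ext2(2) unfolding v_def CX0_basis_def by (auto split: sum.splits)
  define \<eta> where "\<eta> = nat_of_basis B0 v"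
  have \<eta>: "\<eta> \<in> N0" unfolding \<eta>_def by (rule N0_nat_of_basis[OF v_carrier v_natural])
  have \<eta>_basis: "\<eta> P (e w) = v P w" if "P \<in> C" "w \<in> B0 P" for P w
    unfolding \<eta>_def by (rule N0_nat_of_basis_basis_vec[OF v_carrier v_natural that])
  have "\<eta> S' (e (Inl (rep_cls F F1 S S' (incl S')))) = Mmor S' S (incl S') x1'"
    using \<eta>_basis[OF S'_in_C] rep_ext_rep_cls[OF rep_classes_F1 S_in_C x1' S'_in_C incl_S'_in_F(2)]
      rep1.rep_cls_in_Rep[OF incl_S'_in_F(2)] unfolding v_def CX0_basis_def by simp
  moreover have "\<eta> S' (e (Inr (rep_cls F F2 S' S' (incl S')))) = x2"
    using \<eta>_basis[OF S'_in_C] rep_ext_incl[OF rep_classes_F2 S'_in_C x2]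
      rep2.rep_cls_in_Rep[OF incl_S'_in_F(1)] unfolding v_def CX0_basis_def by simp
  moreover have "\<ominus>\<^bsub>M S'\<^esub> Mmor S' S (incl S') x1' = Mmor S' S (incl S') x1"
    unfolding x1'_def
    using linear_map_minus[OF M_module[OF S_in_C] M_module[OF S'_in_C] Mmor_linear[OF S'_in_C S_in_C incl_S'_in_F(2)]
        NS.a_inv_closed[OF fixed_pts_carrier[OF rep_classes_F1 S_in_C x1]]]
      NS.minus_minus[OF fixed_pts_carrier[OF rep_classes_F1 S_in_C x1]] by simp
  ultimately have "eval_incl (f_star \<eta>) = u" unfolding eval_incl_f_star[OF \<eta>] u by simp
  then show "u \<in> eval_incl ` f_star ` N0" using \<eta> by blast
qed

lemma eval_incl_add: "eval_incl (\<eta> \<oplus>\<^bsub>nm1\<^esub> \<mu>) = eval_incl \<eta> \<oplus>\<^bsub>M S'\<^esub> eval_incl \<mu>"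
  unfolding eval_incl_def nat_mod_add using S'_in_C Fe_incl_in_free_mod by simp

lemma eval_incl_smult: "eval_incl (r \<odot>\<^bsub>nm1\<^esub> \<eta>) = r \<odot>\<^bsub>M S'\<^esub> eval_incl \<eta>"
  unfolding eval_incl_def nat_mod_smult using S'_in_C Fe_incl_in_free_mod by simp

lemma eval_incl_coset: "eval_incl ` a_r_coset nm1 Y \<eta> = a_r_coset (M S') (eval_incl ` Y) (eval_incl \<eta>)"
  unfolding a_r_coset_def' image_UN by (simp add: eval_incl_add SUP_image comp_def)

lemma coset_f_star_subset_N1:
  assumes "\<eta> \<in> N1"
  shows "a_r_coset nm1 (f_star ` N0) \<eta> \<subseteq> N1"
  unfolding a_r_coset_def' nat_mod_add using N1_add_closed[OF f_star_in_N1 assms] by blast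

lemma eval_incl_image_f_star: "eval_incl ` f_star ` N0 = fixed_sum"
  using eval_incl_f_star_subset fixed_sum_subset_eval_incl_f_star by blast

lemma eval_incl_coset_f_star:
  "eval_incl ` a_r_coset nm1 (f_star ` N0) \<eta> = a_r_coset (M S') fixed_sum (eval_incl \<eta>)"
  unfolding eval_incl_coset eval_incl_image_f_star ..

lemma carrier_coker:
  "carrier (quot_mod nm1 (f_star ` N0)) = (\<lambda>\<eta>. a_r_coset nm1 (f_star ` N0) \<eta>) ` N1"
  unfolding quot_mod_def A_RCOSETS_def' carrier_nat_mod by auto

lemma carrier_quot_fixed_sum:
  "carrier (quot_mod (submod (M S') (fixed_pts G C M Mmap Fe S')) fixed_sum)
     = (\<lambda>x. a_r_coset (M S') fixed_sum x) ` fixed_pts G C M Mmap Fe S'"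
  unfolding quot_mod_def A_RCOSETS_def' a_r_coset_submod by (auto simp: submod_def)

lemma bij_betw_image_eval_incl:
  "bij_betw (image eval_incl) (carrier (quot_mod nm1 (f_star ` N0)))
     (carrier (quot_mod (submod (M S') (fixed_pts G C M Mmap Fe S')) fixed_sum))"
  unfolding bij_betw_def
proof
  show "inj_on (image eval_incl) (carrier (quot_mod nm1 (f_star ` N0)))"
  proof (rule inj_onI)
    fix Y Z assume "Y \<in> carrier (quot_mod nm1 (f_star ` N0))" "Z \<in> carrier (quot_mod nm1 (f_star ` N0))"
      and eq: "eval_incl ` Y = eval_incl ` Z"
    then have "Y \<subseteq> N1" "Z \<subseteq> N1" using coset_f_star_subset_N1 unfolding carrier_coker by auto
    then show "Y = Z" using eq inj_on_image_eq_iff[OF inj_on_eval_incl] by blast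
  qed
  show "image eval_incl ` carrier (quot_mod nm1 (f_star ` N0))
      = carrier (quot_mod (submod (M S') (fixed_pts G C M Mmap Fe S')) fixed_sum)"
    unfolding carrier_coker carrier_quot_fixed_sum image_image eval_incl_coset_f_star
    using bij_betw_imp_surj_on[OF bij_betw_eval_incl] by (metis image_image)
qed

lemma coker_iso:
  "mod_iso R (quot_mod nm1 (f_star ` N0)) (quot_mod (submod (M S') (fixed_pts G C M Mmap Fe S')) fixed_sum)"
proof -
  let ?Q1 = "quot_mod nm1 (f_star ` N0)"
  let ?Q2 = "quot_mod (submod (M S') (fixed_pts G C M Mmap Fe S')) fixed_sum"
  have "linear_map R ?Q1 ?Q2 (image eval_incl)"
    unfolding linear_map_def
  proof (intro conjI ballI)
    show "image eval_incl \<in> carrier ?Q1 \<rightarrow> carrier ?Q2"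
      using bij_betw_image_eval_incl unfolding bij_betw_def by blast
  next
    fix Y Z
    show "eval_incl ` (Y \<oplus>\<^bsub>?Q1\<^esub> Z) = eval_incl ` Y \<oplus>\<^bsub>?Q2\<^esub> eval_incl ` Z"
      unfolding quot_mod_def by (simp add: set_add_def' eval_incl_add image_UN submod_def)
  next
    fix r Y
    have "eval_incl ` (r \<odot>\<^bsub>?Q1\<^esub> Y) = (\<Union>\<eta>\<in>Y. eval_incl ` a_r_coset nm1 (f_star ` N0) (r \<odot>\<^bsub>nm1\<^esub> \<eta>))"
      unfolding quot_mod_def by (simp add: image_UN)
    also have "\<dots> = (\<Union>\<eta>\<in>Y. a_r_coset (M S') fixed_sum (r \<odot>\<^bsub>M S'\<^esub> eval_incl \<eta>))"
      unfolding eval_incl_coset_f_star eval_incl_smult ..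
    also have "\<dots> = r \<odot>\<^bsub>?Q2\<^esub> eval_incl ` Y"
      unfolding quot_mod_def by (simp add: a_r_coset_submod image_image) (simp add: submod_def)
    finally show "eval_incl ` (r \<odot>\<^bsub>?Q1\<^esub> Y) = r \<odot>\<^bsub>?Q2\<^esub> eval_incl ` Y" .
  qed
  then show ?thesis unfolding mod_iso_def using bij_betw_image_eval_incl by blast
qed

end

theorem lemma3p11:
  fixes G :: "'a monoid" and p :: nat and S' :: "'a set"
    and R :: "'r ring"
    and F1 F2 Fe F :: "'a set \<Rightarrow> 'a set \<Rightarrow> ('a \<Rightarrow> 'a) set"
    and C :: "'a set set"
    and M :: "'a set \<Rightarrow> ('r, 'm) module"
    and Mmap :: "'a set \<Rightarrow> 'a set \<Rightarrow> ('a \<Rightarrow> 'a) set \<Rightarrow> 'm \<Rightarrow> 'm"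
  assumes "cring R"
    and "group G" and "Factorial_Ring.prime p" and "p_group G p (carrier G)"
    and "subgroup S' G"
    and "fusion_system G (carrier G) F1"
    and "fusion_system G S' F2"
    and "fusion_system G S' Fe"
    and "subsystem Fe F1" and "subsystem Fe F2"
    and F_def: "F = generated_fs G F1 F2"
    and "C \<subseteq> subgrps G (carrier G)" and "S' \<in> C"
    and "\<forall>P\<in>C. \<forall>\<phi>\<in>F P (carrier G). \<phi> ` P \<in> C"
    and "\<forall>P\<in>C. \<forall>Q. subgroup Q G \<and> P \<subseteq> Q \<longrightarrow> Q \<in> C"
    and "orbit_functor G F C R M Mmap"
  shows
    "mod_iso R
       (submod (nat_mod G F C R (CX0_basis F F1 F2 (carrier G) S') (CX0_map R F F1 F2 (carrier G) S') M Mmap)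
          {\<eta> \<in> nat_trans G F C R (CX0_basis F F1 F2 (carrier G) S') (CX0_map R F F1 F2 (carrier G) S') M Mmap.
             fstar R F F1 F2 Fe (carrier G) S' C \<eta>
               = \<zero>\<^bsub>nat_mod G F C R (CX1_basis F Fe S') (CX1_map R F Fe S') M Mmap\<^esub>})
       (submod (M (carrier G)) (fixed_pts G C M Mmap F (carrier G)))
   \<and> mod_iso R
       (quot_mod (nat_mod G F C R (CX1_basis F Fe S') (CX1_map R F Fe S') M Mmap)
          (fstar R F F1 F2 Fe (carrier G) S' C `
             nat_trans G F C R (CX0_basis F F1 F2 (carrier G) S') (CX0_map R F F1 F2 (carrier G) S') M Mmap))
       (quot_mod (submod (M S') (fixed_pts G C M Mmap Fe S'))
          (set_add (M S')
             (Mmap S' (carrier G) (orb_cls G S' (carrier G) (restrict id S'))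
                ` fixed_pts G C M Mmap F1 (carrier G))
             (fixed_pts G C M Mmap F2 S')))"
proof -
  have "finite (carrier G)" using assms(4) unfolding p_group_def by blast
  then interpret fusion_amalgam G S' R F1 F2 Fe F C M Mmap
    using assms by (intro fusion_amalgam.intro) auto
  show ?thesis using kernel_iso coker_iso by simp
qed

end
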